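(* Let $m,n\ge3$ and $n'\ge2$. Then (a) $C_m$ and $C_n$ are weakly disjoint if and only if they share no non-trivial common graph factor; (b) $C_m$ and $P_{n'}$ are strongly disjoint if and only if they share no non-trivial common graph factor.
   Context: A weight function on finite $U$ is $\alpha:U\times U\to\mathbb{R}$, $\alpha\ge0$, symmetric, summing to $1$; degree $p(u)=\sum_{u'}\alpha(u,u')$; a graph is $(U,\alpha)$; non-trivial means at least two vertices have positive degree. $C_k$ ($k\ge3$): vertices $u_1,\dots,u_k$, $\alpha(u_i,u_{i\pm1})=1/(2k)$ (indices mod $k$), other weights $0$. $P_k$ ($k\ge2$): vertices $u_1,\dots,u_k$, $\alpha(u_i,u_{i+1})=\alpha(u_{i+1},u_i)=1/(2(k-1))$, other weights $0$. For graphs $G=(U,\alpha)$, $H=(V,\beta)$ with degrees $p,q$, $H\mid G$ means there is a surjective $\phi:U\to V$ with (i) $q(v)=\sum_{u\in\phi^{-1}(v)}p(u)$, and (ii) $q(v)\sum_{u'\in\phi^{-1}(v')}\alpha(u,u')=p(u)\beta(v,v')$ for all $v,v'$, $u\in\phi^{-1}(v)$; a common factor of $G,H$ is a graph $K$ with $K\mid G$ and $K\mid H$. A weight joining of $\alpha,\beta$ is a weight function $\gamma$ on $U\times V$ with degree $r(u,v)=\sum_{(u',v')}\gamma((u,v),(u',v'))$ such that $\sum_v r(u,v)=p(u)$, $\sum_u r(u,v)=q(v)$, $p(u)\sum_{\tilde v}\gamma((u,v),(u',\tilde v))=\alpha(u,u')r(u,v)$ and $q(v)\sum_{\tilde u}\gamma((u,v),(\tilde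 u,v'))=\beta(v,v')r(u,v)$. Strongly disjoint: the only weight joining is $\alpha\otimes\beta$, $(\alpha\otimes\beta)((u,v),(u',v'))=\alpha(u,u')\beta(v,v')$; weakly disjoint: every weight joining has degree $r(u,v)=p(u)q(v)$. *)

theory Defs
  imports Main "HOL.Real"
begin

text \<open>A graph is a pair (U, alpha): U a finite vertex set and alpha a weight function
  on U (non-negative, symmetric, summing to 1). Values outside U x U are fixed to 0.\<close>

definition weight_fun :: "'a set \<Rightarrow> ('a \<Rightarrow> 'a \<Rightarrow> real) \<Rightarrow> bool" where
  "weight_fun U \<alpha> \<longleftrightarrow> finite U \<and> (\<forall>x y. 0 \<le> \<alpha> x y) \<and> (\<forall>x y. \<alpha> x y = \<alpha> y x)
     \<and> (\<forall>x y. (x \<notin> U \<or> y \<notin> U) \<longrightarrow> \<alpha> x y = 0)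
     \<and> (\<Sum>x\<in>U. \<Sum>y\<in>U. \<alpha> x y) = 1"

definition wdeg :: "'a set \<Rightarrow> ('a \<Rightarrow> 'a \<Rightarrow> real) \<Rightarrow> 'a \<Rightarrow> real" where
  "wdeg U \<alpha> u = (\<Sum>u'\<in>U. \<alpha> u u')"

definition nontrivial_graph :: "'a set \<Rightarrow> ('a \<Rightarrow> 'a \<Rightarrow> real) \<Rightarrow> bool" where
  "nontrivial_graph U \<alpha> \<longleftrightarrow> (\<exists>u\<in>U. \<exists>v\<in>U. u \<noteq> v \<and> 0 < wdeg U \<alpha> u \<and> 0 < wdeg U \<alpha> v)"

text \<open>Cycle C_k and path P_k, with vertices u_1..u_k represented by 0..<k.\<close>

definition cycle_w :: "nat \<Rightarrow> nat \<Rightarrow> nat \<Rightarrow> real" where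
  "cycle_w k i j = (if i < k \<and> j < k \<and> (j = (i + 1) mod k \<or> i = (j + 1) mod k)
                    then 1 / (2 * real k) else 0)"

definition path_w :: "nat \<Rightarrow> nat \<Rightarrow> nat \<Rightarrow> real" where
  "path_w k i j = (if i < k \<and> j < k \<and> (j = i + 1 \<or> i = j + 1)
                   then 1 / (2 * (real k - 1)) else 0)"

definition graph_factor :: "'b set \<Rightarrow> ('b \<Rightarrow> 'b \<Rightarrow> real) \<Rightarrow> 'a set \<Rightarrow> ('a \<Rightarrow> 'a \<Rightarrow> real) \<Rightarrow> bool" where
  "graph_factor V \<beta> U \<alpha> \<longleftrightarrow> (\<exists>\<phi>. \<phi> ` U = V
     \<and> (\<forall>v\<in>V. wdeg V \<beta> v = (\<Sum>u\<in>{u\<in>U. \<phi> u = v}. wdeg U \<alpha> u))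
     \<and> (\<forall>v\<in>V. \<forall>v'\<in>V. \<forall>u\<in>U. \<phi> u = v \<longrightarrow>
          wdeg V \<beta> v * (\<Sum>u'\<in>{u'\<in>U. \<phi> u' = v'}. \<alpha> u u') = wdeg U \<alpha> u * \<beta> v v'))"

text \<open>Since a factor of G is the surjective image of
  the finite vertex set of G, it suffices (up to isomorphism) to consider factors with vertex
  set a subset of nat.\<close>

definition has_nontrivial_common_factor ::
  "'a set \<Rightarrow> ('a \<Rightarrow> 'a \<Rightarrow> real) \<Rightarrow> 'b set \<Rightarrow> ('b \<Rightarrow> 'b \<Rightarrow> real) \<Rightarrow> bool" where
  "has_nontrivial_common_factor U \<alpha> V \<beta> \<longleftrightarrow>
     (\<exists>(W::nat set) \<kappa>. weight_fun W \<kappa> \<and> nontrivial_graph W \<kappa>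
        \<and> graph_factor W \<kappa> U \<alpha> \<and> graph_factor W \<kappa> V \<beta>)"

definition weight_joining ::
  "'a set \<Rightarrow> ('a \<Rightarrow> 'a \<Rightarrow> real) \<Rightarrow> 'b set \<Rightarrow> ('b \<Rightarrow> 'b \<Rightarrow> real)
     \<Rightarrow> ('a \<times> 'b \<Rightarrow> 'a \<times> 'b \<Rightarrow> real) \<Rightarrow> bool" where
  "weight_joining U \<alpha> V \<beta> \<gamma> \<longleftrightarrow> weight_fun (U \<times> V) \<gamma>
     \<and> (\<forall>u\<in>U. (\<Sum>v\<in>V. wdeg (U \<times> V) \<gamma> (u, v)) = wdeg U \<alpha> u)
     \<and> (\<forall>v\<in>V. (\<Sum>u\<in>U. wdeg (U \<times> V) \<gamma> (u, v)) = wdeg V \<beta> v)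
     \<and> (\<forall>u\<in>U. \<forall>u'\<in>U. \<forall>v\<in>V.
          wdeg U \<alpha> u * (\<Sum>v'\<in>V. \<gamma> (u, v) (u', v')) = \<alpha> u u' * wdeg (U \<times> V) \<gamma> (u, v))
     \<and> (\<forall>u\<in>U. \<forall>v\<in>V. \<forall>v'\<in>V.
          wdeg V \<beta> v * (\<Sum>u'\<in>U. \<gamma> (u, v) (u', v')) = \<beta> v v' * wdeg (U \<times> V) \<gamma> (u, v))"

definition tensor_weight ::
  "('a \<Rightarrow> 'a \<Rightarrow> real) \<Rightarrow> ('b \<Rightarrow> 'b \<Rightarrow> real) \<Rightarrow> ('a \<times> 'b \<Rightarrow> 'a \<times> 'b \<Rightarrow> real)" where
  "tensor_weight \<alpha> \<beta> = (\<lambda>(u, v) (u', v'). \<alpha> u u' * \<beta> v v')"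

definition strongly_disjoint ::
  "'a set \<Rightarrow> ('a \<Rightarrow> 'a \<Rightarrow> real) \<Rightarrow> 'b set \<Rightarrow> ('b \<Rightarrow> 'b \<Rightarrow> real) \<Rightarrow> bool" where
  "strongly_disjoint U \<alpha> V \<beta> \<longleftrightarrow>
     (\<forall>\<gamma>. weight_joining U \<alpha> V \<beta> \<gamma> \<longrightarrow> \<gamma> = tensor_weight \<alpha> \<beta>)"

definition weakly_disjoint ::
  "'a set \<Rightarrow> ('a \<Rightarrow> 'a \<Rightarrow> real) \<Rightarrow> 'b set \<Rightarrow> ('b \<Rightarrow> 'b \<Rightarrow> real) \<Rightarrow> bool" where
  "weakly_disjoint U \<alpha> V \<beta> \<longleftrightarrow>
     (\<forall>\<gamma>. weight_joining U \<alpha> V \<beta> \<gamma> \<longrightarrow>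
        (\<forall>u\<in>U. \<forall>v\<in>V. wdeg (U \<times> V) \<gamma> (u, v) = wdeg U \<alpha> u * wdeg V \<beta> v))"

end

theory Submission
  imports Defs "HOL-Number_Theory.Cong"
begin

text \<open>A non-trivial common factor \<open>\<kappa>\<close> of two graphs yields their relatively independent joining
  over \<open>\<kappa>\<close>, whose degree vanishes at pairs of vertices lying over distinct vertices of \<open>\<kappa>\<close>;
  so the graphs are not even weakly disjoint. If \<open>d = gcd m n\<close> (resp. \<open>d = gcd m (2 (n' - 1))\<close>)
  is at least 2, both graphs map onto the cycle \<open>C_d\<close> folded by a reflection, a path with a loop
  at its end when \<open>d\<close> is odd, which is a non-trivial common factor.

  If the gcd is 1, the balance equations of a joining \<open>\<gamma>\<close> at a vertex with two neighbours of
  equal weight say that \<open>\<gamma>\<close> cannot tell the two orientations of the cycle apart. Consequently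
  \<open>\<gamma>\<close> is invariant under rotating both cycles simultaneously (after unfolding \<open>P_n'\<close> onto
  \<open>C_(2 (n' - 1))\<close>), a rotation that is transitive by the Chinese remainder theorem. This forces the
  degrees of a joining of two cycles, and every weight of a joining of a cycle and a path.\<close>

lemma sum_eq_two_points:
  assumes "finite S" "a \<in> S" "b \<in> S" "a \<noteq> b"
    and "\<And>z. z \<in> S \<Longrightarrow> z \<noteq> a \<Longrightarrow> z \<noteq> b \<Longrightarrow> f z = 0"
  shows "sum f S = f a + f b"
proof -
  have "sum f S = sum f {a, b}"
    by (rule sum.mono_neutral_right) (use assms in auto)
  then show ?thesis using assms by simp
qed

lemma sum_eq_one_point:
  assumes "finite S" "a \<in> S" "\<And>z. z \<in> S \<Longrightarrow> z \<noteq> a \<Longrightarrow> f z = 0"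
  shows "sum f S = f a"
proof -
  have "sum f S = sum f {a}"
    by (rule sum.mono_neutral_right) (use assms in auto)
  then show ?thesis using assms by simp
qed

lemma weight_funD:
  assumes "weight_fun U \<alpha>"
  shows "finite U" "\<And>x y. 0 \<le> \<alpha> x y" "\<And>x y. \<alpha> x y = \<alpha> y x"
    "\<And>x y. x \<notin> U \<Longrightarrow> \<alpha> x y = 0" "\<And>x y. y \<notin> U \<Longrightarrow> \<alpha> x y = 0"
    "(\<Sum>x\<in>U. \<Sum>y\<in>U. \<alpha> x y) = 1"
  using assms unfolding weight_fun_def by auto

lemma wdeg_nonneg: "weight_fun U \<alpha> \<Longrightarrow> 0 \<le> wdeg U \<alpha> u"
  unfolding wdeg_def by (rule sum_nonneg) (simp add: weight_funD)

lemma weight_le_wdeg: "weight_fun U \<alpha> \<Longrightarrow> u' \<in> U \<Longrightarrow> \<alpha> u u' \<le> wdeg U \<alpha> u"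
  unfolding wdeg_def by (rule member_le_sum) (auto simp: weight_funD)

lemma weight_eq_0_if_wdeg_eq_0: "weight_fun U \<alpha> \<Longrightarrow> wdeg U \<alpha> u = 0 \<Longrightarrow> \<alpha> u u' = 0"
  by (metis weight_le_wdeg antisym weight_funD(2,5))

lemma sum_wdeg: "weight_fun U \<alpha> \<Longrightarrow> sum (wdeg U \<alpha>) U = 1"
  unfolding wdeg_def using weight_funD(6) by blast

lemma weight_funI_wdeg:
  assumes "finite U" "\<And>x y. 0 \<le> \<alpha> x y" "\<And>x y. \<alpha> x y = \<alpha> y x"
    "\<And>x y. x \<notin> U \<or> y \<notin> U \<Longrightarrow> \<alpha> x y = 0" "sum (wdeg U \<alpha>) U = 1"
  shows "weight_fun U \<alpha>"
  using assms unfolding weight_fun_def wdeg_def by blast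

subsection \<open>Cycles and paths\<close>

definition cyc_succ :: "nat \<Rightarrow> nat \<Rightarrow> nat" where
  "cyc_succ m u = (u + 1) mod m"

definition cyc_pred :: "nat \<Rightarrow> nat \<Rightarrow> nat" where
  "cyc_pred m u = (u + (m - 1)) mod m"

lemma cyc_succ_less: "0 < m \<Longrightarrow> cyc_succ m u < m"
  by (simp add: cyc_succ_def)

lemma cyc_pred_less: "0 < m \<Longrightarrow> cyc_pred m u < m"
  by (simp add: cyc_pred_def)

lemma cyc_succ_eq: "u < m \<Longrightarrow> cyc_succ m u = (if u + 1 = m then 0 else u + 1)"
  by (auto simp: cyc_succ_def)

lemma cyc_pred_eq:
  assumes "u < m"
  shows "cyc_pred m u = (if u = 0 then m - 1 else u - 1)"
proof (cases "u = 0")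
  case False
  then have "u + (m - 1) = (u - 1) + m"
    using assms by simp
  then have "cyc_pred m u = (u - 1) mod m"
    by (simp only: cyc_pred_def mod_add_self2)
  then show ?thesis
    using False assms by simp
qed (use assms in \<open>simp add: cyc_pred_def\<close>)

lemma cyc_succ_neq_pred: "3 \<le> m \<Longrightarrow> u < m \<Longrightarrow> cyc_succ m u \<noteq> cyc_pred m u"
  by (auto simp: cyc_succ_eq cyc_pred_eq)

lemma cyc_pred_succ: "u < m \<Longrightarrow> cyc_pred m (cyc_succ m u) = u"
  by (auto simp: cyc_succ_eq cyc_pred_eq cyc_succ_less)

lemma cyc_succ_pred: "u < m \<Longrightarrow> cyc_succ m (cyc_pred m u) = u"
  by (auto simp: cyc_succ_eq cyc_pred_eq cyc_pred_less)

lemma cycle_w_eq: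
  assumes "u < m" "u' < m"
  shows "cycle_w m u u' = (if u' = cyc_succ m u \<or> u' = cyc_pred m u then 1 / (2 * real m) else 0)"
proof -
  have "u = cyc_succ m u' \<longleftrightarrow> u' = cyc_pred m u"
    using assms by (auto simp: cyc_succ_eq cyc_pred_eq)
  then show ?thesis using assms by (auto simp: cycle_w_def cyc_succ_def)
qed

lemma sum_cycle_w:
  assumes "3 \<le> m" "u < m" "S \<subseteq> {0..<m}"
  shows "(\<Sum>u'\<in>S. cycle_w m u u') =
    (of_bool (cyc_succ m u \<in> S) + of_bool (cyc_pred m u \<in> S)) / (2 * real m)"
proof -
  have "(\<Sum>u'\<in>S. cycle_w m u u') = (\<Sum>u'\<in>S. of_bool (u' = cyc_succ m u) / (2 * real m)
        + of_bool (u' = cyc_pred m u) / (2 * real m))"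
    by (rule sum.cong) (use assms cyc_succ_neq_pred[of m u] in \<open>auto simp: cycle_w_eq subset_iff\<close>)
  also have "\<dots> = (of_bool (cyc_succ m u \<in> S) + of_bool (cyc_pred m u \<in> S)) / (2 * real m)"
    using assms finite_subset[OF assms(3)]
    by (simp add: sum.distrib add_divide_distrib flip: sum_divide_distrib)
  finally show ?thesis .
qed

lemma wdeg_cycle: "3 \<le> m \<Longrightarrow> u < m \<Longrightarrow> wdeg {0..<m} (cycle_w m) u = 1 / real m"
  using sum_cycle_w[of m u "{0..<m}"] cyc_succ_less[of m u] cyc_pred_less[of m u]
  by (simp add: wdeg_def)

lemma weight_fun_cycle: "3 \<le> m \<Longrightarrow> weight_fun {0..<m} (cycle_w m)"
  by (rule weight_funI_wdeg) (auto simp: cycle_w_def wdeg_cycle)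

lemma cycle_w_neighbour:
  "3 \<le> m \<Longrightarrow> u < m \<Longrightarrow> u' = cyc_succ m u \<or> u' = cyc_pred m u
    \<Longrightarrow> cycle_w m u u' = 1 / 2 * wdeg {0..<m} (cycle_w m) u"
  by (auto simp: cycle_w_eq wdeg_cycle cyc_succ_less cyc_pred_less)

lemma path_w_eq:
  assumes "v < n'" "v' < n'"
  shows "path_w n' v v' = (if v' = v + 1 \<or> v = v' + 1 then 1 / (2 * real (n' - 1)) else 0)"
  using assms by (auto simp: path_w_def of_nat_diff)

lemma sum_path_w:
  assumes "v < n'" "S \<subseteq> {0..<n'}"
  shows "(\<Sum>v'\<in>S. path_w n' v v') =
     (of_bool (v + 1 \<in> S) + of_bool (0 < v \<and> v - 1 \<in> S)) / (2 * real (n' - 1))"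
proof -
  have "(\<Sum>v'\<in>S. path_w n' v v') = (\<Sum>v'\<in>S. of_bool (v' = v + 1) / (2 * real (n' - 1))
        + of_bool (0 < v \<and> v' = v - 1) / (2 * real (n' - 1)))"
    by (rule sum.cong) (use assms in \<open>auto simp: path_w_eq subset_iff\<close>)
  also have "\<dots> = (of_bool (v + 1 \<in> S) + of_bool (0 < v \<and> v - 1 \<in> S)) / (2 * real (n' - 1))"
    using finite_subset[OF assms(2)]
    by (auto simp: sum.distrib add_divide_distrib sum.If_cases simp flip: sum_divide_distrib)
  finally show ?thesis .
qed

lemma wdeg_path:
  "v < n' \<Longrightarrow> wdeg {0..<n'} (path_w n') v = (of_bool (v + 1 < n') + of_bool (0 < v)) / (2 * real (n' - 1))"
  using sum_path_w[of v n' "{0..<n'}"] by (auto simp: wdeg_def)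

lemma weight_fun_path:
  assumes "2 \<le> n'"
  shows "weight_fun {0..<n'} (path_w n')"
proof (rule weight_funI_wdeg)
  have "sum (wdeg {0..<n'} (path_w n')) {0..<n'}
      = (\<Sum>v\<in>{0..<n'}. of_bool (v + 1 < n') + of_bool (0 < v)) / (2 * real (n' - 1))"
    by (simp add: wdeg_path sum_divide_distrib)
  also have "(\<Sum>v\<in>{0..<n'}. of_bool (v + 1 < n') + of_bool (0 < v)) = (2 * real (n' - 1) :: real)"
  proof -
    have "{0..<n'} \<inter> {v. v + 1 < n'} = {0..<n' - 1}" "{0..<n'} \<inter> {v. 0 < v} = {1..<n'}"
      by auto
    then show ?thesis by (simp add: sum.distrib)
  qed
  finally show "sum (wdeg {0..<n'} (path_w n')) {0..<n'} = 1"
    using assms by simp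
qed (auto simp: path_w_def)

subsection \<open>A common factor yields a non-product joining\<close>

definition factor_map ::
  "'b set \<Rightarrow> ('b \<Rightarrow> 'b \<Rightarrow> real) \<Rightarrow> 'a set \<Rightarrow> ('a \<Rightarrow> 'a \<Rightarrow> real) \<Rightarrow> ('a \<Rightarrow> 'b) \<Rightarrow> bool" where
  "factor_map V \<beta> U \<alpha> \<phi> \<longleftrightarrow> \<phi> ` U = V
     \<and> (\<forall>v\<in>V. wdeg V \<beta> v = (\<Sum>u\<in>{u\<in>U. \<phi> u = v}. wdeg U \<alpha> u))
     \<and> (\<forall>v\<in>V. \<forall>v'\<in>V. \<forall>u\<in>U. \<phi> u = v \<longrightarrow>
          wdeg V \<beta> v * (\<Sum>u'\<in>{u'\<in>U. \<phi> u' = v'}. \<alpha> u u') = wdeg U \<alpha> u * \<beta> v v')"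

lemma graph_factor_iff_factor_map: "graph_factor V \<beta> U \<alpha> \<longleftrightarrow> (\<exists>\<phi>. factor_map V \<beta> U \<alpha> \<phi>)"
  by (simp add: graph_factor_def factor_map_def)

context
  fixes U :: "'a set" and \<alpha> and W :: "'c set" and \<kappa> and \<phi> :: "'a \<Rightarrow> 'c"
  assumes wU: "weight_fun U \<alpha>" and f: "factor_map W \<kappa> U \<alpha> \<phi>"
begin

lemma factor_map_image: "u \<in> U \<Longrightarrow> \<phi> u \<in> W"
  using f by (auto simp: factor_map_def)

lemma factor_map_sum_fibre_wdeg: "w \<in> W \<Longrightarrow> (\<Sum>u\<in>U. if \<phi> u = w then c * wdeg U \<alpha> u else 0) = c * wdeg W \<kappa> w"
  using f weight_funD(1)[OF wU] by (simp add: factor_map_def sum.If_cases sum_distrib_left Int_def conj_commute)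

lemma factor_map_wdeg_le: "u \<in> U \<Longrightarrow> wdeg U \<alpha> u \<le> wdeg W \<kappa> (\<phi> u)"
  using factor_map_sum_fibre_wdeg[of "\<phi> u" 1] factor_map_image[of u] weight_funD(1)[OF wU]
    member_le_sum[of u U "\<lambda>u'. if \<phi> u' = \<phi> u then 1 * wdeg U \<alpha> u' else 0"]
  by (simp add: wdeg_nonneg[OF wU])

lemma factor_map_sum_fibre:
  assumes u: "u \<in> U" and w': "w' \<in> W"
  shows "(\<Sum>u'\<in>{u'\<in>U. \<phi> u' = w'}. \<alpha> u u') = wdeg U \<alpha> u * \<kappa> (\<phi> u) w' / wdeg W \<kappa> (\<phi> u)"
proof (cases "wdeg W \<kappa> (\<phi> u) = 0")
  case True
  then have "wdeg U \<alpha> u = 0"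
    using factor_map_wdeg_le[OF u] wdeg_nonneg[OF wU, of u] by simp
  then show ?thesis using True weight_eq_0_if_wdeg_eq_0[OF wU] by simp
next
  case False
  have "wdeg W \<kappa> (\<phi> u) * (\<Sum>u'\<in>{u'\<in>U. \<phi> u' = w'}. \<alpha> u u') = wdeg U \<alpha> u * \<kappa> (\<phi> u) w'"
    using f u w' by (auto simp: factor_map_def)
  then show ?thesis using False by (simp add: field_simps)
qed

lemma factor_map_weight_eq_0:
  assumes u: "u \<in> U" and u': "u' \<in> U" and "\<kappa> (\<phi> u) (\<phi> u') = 0"
  shows "\<alpha> u u' = 0"
proof -
  have "(\<Sum>x\<in>{x\<in>U. \<phi> x = \<phi> u'}. \<alpha> u x) = 0"
    using factor_map_sum_fibre[OF u factor_map_image[OF u']] assms(3) by simp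
  then have "\<forall>x\<in>{x\<in>U. \<phi> x = \<phi> u'}. \<alpha> u x = 0"
    by (subst (asm) sum_nonneg_eq_0_iff) (use weight_funD[OF wU] in auto)
  then show ?thesis using u' by auto
qed

lemma factor_map_lift_wdeg_pos:
  assumes w: "w \<in> W" and pos: "0 < wdeg W \<kappa> w"
  obtains u where "u \<in> U" "\<phi> u = w" "0 < wdeg U \<alpha> u"
proof (rule ccontr)
  assume "\<not> thesis"
  with that have "\<forall>u\<in>U. (if \<phi> u = w then 1 * wdeg U \<alpha> u else 0) = 0"
    using wdeg_nonneg[OF wU] by (metis less_eq_real_def mult_1)
  then show False
    using factor_map_sum_fibre_wdeg[OF w, of 1] pos by simp
qed

end

text \<open>Where \<open>\<kappa> (\<phi> u) (\<phi> u') = 0\<close> the quotient is a division by zero, but then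
  \<open>\<alpha> u u' = 0\<close> anyway.\<close>

definition rel_indep_joining ::
  "'a set \<Rightarrow> 'b set \<Rightarrow> ('a \<Rightarrow> 'c) \<Rightarrow> ('b \<Rightarrow> 'c) \<Rightarrow> ('a \<Rightarrow> 'a \<Rightarrow> real) \<Rightarrow> ('b \<Rightarrow> 'b \<Rightarrow> real)
     \<Rightarrow> ('c \<Rightarrow> 'c \<Rightarrow> real) \<Rightarrow> ('a \<times> 'b \<Rightarrow> 'a \<times> 'b \<Rightarrow> real)" where
  "rel_indep_joining U V \<phi> \<psi> \<alpha> \<beta> \<kappa> = (\<lambda>(u, v) (u', v').
     if u \<in> U \<and> v \<in> V \<and> u' \<in> U \<and> v' \<in> V \<and> \<phi> u = \<psi> v \<and> \<phi> u' = \<psi> v'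
     then \<alpha> u u' * \<beta> v v' / \<kappa> (\<phi> u) (\<phi> u') else 0)"

lemma rel_indep_joining_swap:
  "rel_indep_joining U V \<phi> \<psi> \<alpha> \<beta> \<kappa> (u, v) (u', v') = rel_indep_joining V U \<psi> \<phi> \<beta> \<alpha> \<kappa> (v, u) (v', u')"
  by (auto simp: rel_indep_joining_def)

context
  fixes U :: "'a set" and \<alpha> and V :: "'b set" and \<beta> and W :: "'c set" and \<kappa> \<phi> \<psi>
  assumes wU: "weight_fun U \<alpha>" and wV: "weight_fun V \<beta>"
    and fU: "factor_map W \<kappa> U \<alpha> \<phi>" and fV: "factor_map W \<kappa> V \<beta> \<psi>"
begin

lemma sum_rel_indep_joining_snd:
  assumes u: "u \<in> U" and v: "v \<in> V" and u': "u' \<in> U"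
  shows "(\<Sum>v'\<in>V. rel_indep_joining U V \<phi> \<psi> \<alpha> \<beta> \<kappa> (u, v) (u', v')) =
    (if \<phi> u = \<psi> v then \<alpha> u u' * wdeg V \<beta> v / wdeg W \<kappa> (\<phi> u) else 0)"
proof (cases "\<phi> u = \<psi> v")
  case True
  let ?c = "\<alpha> u u' / \<kappa> (\<phi> u) (\<phi> u')"
  have "(\<Sum>v'\<in>V. rel_indep_joining U V \<phi> \<psi> \<alpha> \<beta> \<kappa> (u, v) (u', v'))
      = ?c * (\<Sum>v'\<in>{v'\<in>V. \<psi> v' = \<phi> u'}. \<beta> v v')"
    using weight_funD(1)[OF wV] u v u' True
    by (simp add: rel_indep_joining_def sum.inter_filter[symmetric] sum_distrib_left eq_commute
        cong: if_cong)
  also have "\<dots> = ?c * (wdeg V \<beta> v * \<kappa> (\<phi> u) (\<phi> u') / wdeg W \<kappa> (\<phi> u))"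
    using factor_map_sum_fibre[OF wV fV v factor_map_image[OF wU fU u']] True by simp
  also have "\<dots> = \<alpha> u u' * wdeg V \<beta> v / wdeg W \<kappa> (\<phi> u)"
    using factor_map_weight_eq_0[OF wU fU u u'] by (cases "\<kappa> (\<phi> u) (\<phi> u') = 0") auto
  finally show ?thesis using True by simp
qed (simp add: rel_indep_joining_def)

lemma wdeg_rel_indep_joining:
  assumes u: "u \<in> U" and v: "v \<in> V"
  shows "wdeg (U \<times> V) (rel_indep_joining U V \<phi> \<psi> \<alpha> \<beta> \<kappa>) (u, v) =
    (if \<phi> u = \<psi> v then wdeg U \<alpha> u * wdeg V \<beta> v / wdeg W \<kappa> (\<phi> u) else 0)"
proof -
  have "wdeg (U \<times> V) (rel_indep_joining U V \<phi> \<psi> \<alpha> \<beta> \<kappa>) (u, v) =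
      (\<Sum>u'\<in>U. \<Sum>v'\<in>V. rel_indep_joining U V \<phi> \<psi> \<alpha> \<beta> \<kappa> (u, v) (u', v'))"
    by (simp add: wdeg_def sum.cartesian_product)
  also have "\<dots> = (\<Sum>u'\<in>U. if \<phi> u = \<psi> v then \<alpha> u u' * wdeg V \<beta> v / wdeg W \<kappa> (\<phi> u) else 0)"
    using sum_rel_indep_joining_snd[OF u v] by simp
  also have "\<dots> = (if \<phi> u = \<psi> v then wdeg U \<alpha> u * wdeg V \<beta> v / wdeg W \<kappa> (\<phi> u) else 0)"
    by (simp add: wdeg_def[of U] sum_distrib_right sum_divide_distrib)
  finally show ?thesis .
qed

lemma sum_wdeg_rel_indep_joining_snd:
  assumes u: "u \<in> U"
  shows "(\<Sum>v\<in>V. wdeg (U \<times> V) (rel_indep_joining U V \<phi> \<psi> \<alpha> \<beta> \<kappa>) (u, v)) = wdeg U \<alpha> u"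
proof -
  let ?s = "wdeg W \<kappa> (\<phi> u)"
  have "(\<Sum>v\<in>V. wdeg (U \<times> V) (rel_indep_joining U V \<phi> \<psi> \<alpha> \<beta> \<kappa>) (u, v))
      = (\<Sum>v\<in>V. if \<psi> v = \<phi> u then wdeg U \<alpha> u / ?s * wdeg V \<beta> v else 0)"
    using u by (intro sum.cong) (auto simp: wdeg_rel_indep_joining)
  also have "\<dots> = wdeg U \<alpha> u / ?s * ?s"
    using factor_map_sum_fibre_wdeg[OF wV fV factor_map_image[OF wU fU u]] .
  also have "\<dots> = wdeg U \<alpha> u"
    using factor_map_wdeg_le[OF wU fU u] wdeg_nonneg[OF wU, of u] by (cases "?s = 0") auto
  finally show ?thesis .
qed

lemma sum_wdeg_rel_indep_joining_fst:
  assumes v: "v \<in> V"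
  shows "(\<Sum>u\<in>U. wdeg (U \<times> V) (rel_indep_joining U V \<phi> \<psi> \<alpha> \<beta> \<kappa>) (u, v)) = wdeg V \<beta> v"
proof -
  let ?s = "wdeg W \<kappa> (\<psi> v)"
  have "(\<Sum>u\<in>U. wdeg (U \<times> V) (rel_indep_joining U V \<phi> \<psi> \<alpha> \<beta> \<kappa>) (u, v))
      = (\<Sum>u\<in>U. if \<phi> u = \<psi> v then wdeg V \<beta> v / ?s * wdeg U \<alpha> u else 0)"
    using v by (intro sum.cong) (auto simp: wdeg_rel_indep_joining)
  also have "\<dots> = wdeg V \<beta> v / ?s * ?s"
    using factor_map_sum_fibre_wdeg[OF wU fU factor_map_image[OF wV fV v]] .
  also have "\<dots> = wdeg V \<beta> v"
    using factor_map_wdeg_le[OF wV fV v] wdeg_nonneg[OF wV, of v] by (cases "?s = 0") auto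
  finally show ?thesis .
qed

end

lemma weight_joining_rel_indep_joining:
  assumes wU: "weight_fun U \<alpha>" and wV: "weight_fun V \<beta>" and wW: "weight_fun W \<kappa>"
    and fU: "factor_map W \<kappa> U \<alpha> \<phi>" and fV: "factor_map W \<kappa> V \<beta> \<psi>"
  shows "weight_joining U \<alpha> V \<beta> (rel_indep_joining U V \<phi> \<psi> \<alpha> \<beta> \<kappa>)"
  unfolding weight_joining_def
proof (intro conjI ballI)
  let ?\<gamma> = "rel_indep_joining U V \<phi> \<psi> \<alpha> \<beta> \<kappa>"
  have "sum (wdeg (U \<times> V) ?\<gamma>) (U \<times> V) = (\<Sum>u\<in>U. \<Sum>v\<in>V. wdeg (U \<times> V) ?\<gamma> (u, v))"
    by (simp add: sum.cartesian_product)
  also have "\<dots> = sum (wdeg U \<alpha>) U"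
    by (simp add: sum_wdeg_rel_indep_joining_snd[OF wU wV fU fV])
  finally have "sum (wdeg (U \<times> V) ?\<gamma>) (U \<times> V) = sum (wdeg U \<alpha>) U" .
  then show "weight_fun (U \<times> V) ?\<gamma>"
    using weight_funD[OF wU] weight_funD[OF wV] weight_funD[OF wW] sum_wdeg[OF wU]
    by (intro weight_funI_wdeg) (auto simp: rel_indep_joining_def split: if_splits)
  show "(\<Sum>v\<in>V. wdeg (U \<times> V) ?\<gamma> (u, v)) = wdeg U \<alpha> u" if "u \<in> U" for u
    using sum_wdeg_rel_indep_joining_snd[OF wU wV fU fV that] .
  show "(\<Sum>u\<in>U. wdeg (U \<times> V) ?\<gamma> (u, v)) = wdeg V \<beta> v" if "v \<in> V" for v
    using sum_wdeg_rel_indep_joining_fst[OF wU wV fU fV that] .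
  show "wdeg U \<alpha> u * (\<Sum>v'\<in>V. ?\<gamma> (u, v) (u', v')) = \<alpha> u u' * wdeg (U \<times> V) ?\<gamma> (u, v)"
    if "u \<in> U" "u' \<in> U" "v \<in> V" for u u' v
    using that by (simp add: sum_rel_indep_joining_snd[OF wU wV fU fV] wdeg_rel_indep_joining[OF wU wV fU fV])
  show "wdeg V \<beta> v * (\<Sum>u'\<in>U. ?\<gamma> (u, v) (u', v')) = \<beta> v v' * wdeg (U \<times> V) ?\<gamma> (u, v)"
    if "u \<in> U" "v \<in> V" "v' \<in> V" for u v v'
    using that rel_indep_joining_swap[of U V \<phi> \<psi> \<alpha> \<beta> \<kappa> u v]
      sum_rel_indep_joining_snd[OF wV wU fV fU, of v u v']
    by (simp add: wdeg_rel_indep_joining[OF wU wV fU fV])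
qed

lemma wdeg_tensor_weight:
  assumes "u \<in> U" "v \<in> V"
  shows "wdeg (U \<times> V) (tensor_weight \<alpha> \<beta>) (u, v) = wdeg U \<alpha> u * wdeg V \<beta> v"
  unfolding wdeg_def tensor_weight_def
  by (simp add: sum.cartesian_product[symmetric] sum_product)

lemma common_factor_non_product_joining:
  assumes wU: "weight_fun U \<alpha>" and wV: "weight_fun V \<beta>"
    and "has_nontrivial_common_factor U \<alpha> V \<beta>"
  obtains \<gamma> u v where "weight_joining U \<alpha> V \<beta> \<gamma>" "u \<in> U" "v \<in> V"
    "wdeg (U \<times> V) \<gamma> (u, v) \<noteq> wdeg U \<alpha> u * wdeg V \<beta> v"
proof -
  obtain W :: "nat set" and \<kappa> \<phi> \<psi> where wW: "weight_fun W \<kappa>" and nt: "nontrivial_graph W \<kappa>"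
    and fU: "factor_map W \<kappa> U \<alpha> \<phi>" and fV: "factor_map W \<kappa> V \<beta> \<psi>"
    using assms(3) by (auto simp: has_nontrivial_common_factor_def graph_factor_iff_factor_map)
  obtain w1 w2 where w: "w1 \<in> W" "w2 \<in> W" "w1 \<noteq> w2" "0 < wdeg W \<kappa> w1" "0 < wdeg W \<kappa> w2"
    using nt unfolding nontrivial_graph_def by blast
  obtain u where u: "u \<in> U" "\<phi> u = w1" "0 < wdeg U \<alpha> u"
    using factor_map_lift_wdeg_pos[OF wU fU w(1,4)] .
  obtain v where v: "v \<in> V" "\<psi> v = w2" "0 < wdeg V \<beta> v"
    using factor_map_lift_wdeg_pos[OF wV fV w(2,5)] .
  \<comment> \<open>the joining lives over the diagonal of the factor, but \<open>u\<close> and \<open>v\<close> lie over distinct points\<close>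
  have "wdeg (U \<times> V) (rel_indep_joining U V \<phi> \<psi> \<alpha> \<beta> \<kappa>) (u, v) = 0"
    using wdeg_rel_indep_joining[OF wU wV fU fV u(1) v(1)] u v w by simp
  moreover have "0 < wdeg U \<alpha> u * wdeg V \<beta> v"
    using u v by simp
  ultimately show ?thesis
    using that weight_joining_rel_indep_joining[OF wU wV wW fU fV] u v by fastforce
qed

lemma not_weakly_disjoint_if_common_factor:
  "weight_fun U \<alpha> \<Longrightarrow> weight_fun V \<beta> \<Longrightarrow> has_nontrivial_common_factor U \<alpha> V \<beta>
    \<Longrightarrow> \<not> weakly_disjoint U \<alpha> V \<beta>"
  unfolding weakly_disjoint_def by (metis common_factor_non_product_joining)

lemma not_strongly_disjoint_if_common_factor:
  "weight_fun U \<alpha> \<Longrightarrow> weight_fun V \<beta> \<Longrightarrow> has_nontrivial_common_factor U \<alpha> V \<beta>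
    \<Longrightarrow> \<not> strongly_disjoint U \<alpha> V \<beta>"
  unfolding strongly_disjoint_def by (metis common_factor_non_product_joining wdeg_tensor_weight)

subsection \<open>Joinings with a cycle\<close>

lemma weight_joiningD:
  assumes "weight_joining U \<alpha> V \<beta> \<gamma>"
  shows "weight_fun (U \<times> V) \<gamma>"
    "\<And>u. u \<in> U \<Longrightarrow> (\<Sum>v\<in>V. wdeg (U \<times> V) \<gamma> (u, v)) = wdeg U \<alpha> u"
    "\<And>v. v \<in> V \<Longrightarrow> (\<Sum>u\<in>U. wdeg (U \<times> V) \<gamma> (u, v)) = wdeg V \<beta> v"
    "\<And>u u' v. u \<in> U \<Longrightarrow> u' \<in> U \<Longrightarrow> v \<in> V \<Longrightarrow>
       wdeg U \<alpha> u * (\<Sum>v'\<in>V. \<gamma> (u, v) (u', v')) = \<alpha> u u' * wdeg (U \<times> V) \<gamma> (u, v)"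
    "\<And>u v v'. u \<in> U \<Longrightarrow> v \<in> V \<Longrightarrow> v' \<in> V \<Longrightarrow>
       wdeg V \<beta> v * (\<Sum>u'\<in>U. \<gamma> (u, v) (u', v')) = \<beta> v v' * wdeg (U \<times> V) \<gamma> (u, v)"
  using assms unfolding weight_joining_def by blast+

lemma weight_joining_sym: "weight_joining U \<alpha> V \<beta> \<gamma> \<Longrightarrow> \<gamma> x y = \<gamma> y x"
  using weight_funD(3)[OF weight_joiningD(1)] .

lemma weight_joining_finite:
  assumes "weight_joining U \<alpha> V \<beta> \<gamma>"
  shows "V \<noteq> {} \<Longrightarrow> finite U" and "U \<noteq> {} \<Longrightarrow> finite V"
proof -
  have "finite (U \<times> V)"
    using weight_funD(1)[OF weight_joiningD(1)[OF assms]] .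
  then show "V \<noteq> {} \<Longrightarrow> finite U" and "U \<noteq> {} \<Longrightarrow> finite V"
    by (auto simp: finite_cartesian_product_iff)
qed

context
  fixes U :: "'a set" and \<alpha> and V :: "'b set" and \<beta> and \<gamma>
  assumes J: "weight_joining U \<alpha> V \<beta> \<gamma>"
begin

lemma joining_sum_snd_eq:
  assumes "u \<in> U" "v \<in> V" "u' \<in> U" "0 < wdeg U \<alpha> u" "\<alpha> u u' = c * wdeg U \<alpha> u"
  shows "(\<Sum>v'\<in>V. \<gamma> (u, v) (u', v')) = c * wdeg (U \<times> V) \<gamma> (u, v)"
  using weight_joiningD(4)[OF J, of u u' v] assms by simp

lemma joining_sum_fst_eq:
  assumes "u \<in> U" "v \<in> V" "v' \<in> V" "0 < wdeg V \<beta> v" "\<beta> v v' = c * wdeg V \<beta> v"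
  shows "(\<Sum>u'\<in>U. \<gamma> (u, v) (u', v')) = c * wdeg (U \<times> V) \<gamma> (u, v)"
  using weight_joiningD(5)[OF J, of u v v'] assms by simp

lemma joining_eq_0_fst:
  assumes u: "u \<in> U" and v: "v \<in> V" and u': "u' \<in> U" and pos: "0 < wdeg U \<alpha> u" and "\<alpha> u u' = 0"
  shows "\<gamma> (u, v) (u', v') = 0"
proof (cases "v' \<in> V")
  case True
  have "(\<Sum>x\<in>V. \<gamma> (u, v) (u', x)) = 0"
    using joining_sum_snd_eq[OF u v u' pos, of 0] assms(5) by simp
  moreover have "finite V"
    using weight_joining_finite(2)[OF J] u by blast
  ultimately have "\<forall>x\<in>V. \<gamma> (u, v) (u', x) = 0"
    by (simp add: sum_nonneg_eq_0_iff weight_funD(2)[OF weight_joiningD(1)[OF J]])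
  then show ?thesis using True by blast
qed (simp add: weight_funD(5)[OF weight_joiningD(1)[OF J]])

lemma joining_eq_0_snd:
  assumes u: "u \<in> U" and v: "v \<in> V" and v': "v' \<in> V" and pos: "0 < wdeg V \<beta> v" and "\<beta> v v' = 0"
  shows "\<gamma> (u, v) (u', v') = 0"
proof (cases "u' \<in> U")
  case True
  have "(\<Sum>x\<in>U. \<gamma> (u, v) (x, v')) = 0"
    using joining_sum_fst_eq[OF u v v' pos, of 0] assms(5) by simp
  moreover have "finite U"
    using weight_joining_finite(1)[OF J] v by blast
  ultimately have "\<forall>x\<in>U. \<gamma> (u, v) (x, v') = 0"
    by (simp add: sum_nonneg_eq_0_iff weight_funD(2)[OF weight_joiningD(1)[OF J]])
  then show ?thesis using True by blast
qed (simp add: weight_funD(5)[OF weight_joiningD(1)[OF J]])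

end

context
  fixes m :: nat and V :: "'b set" and \<beta> and \<gamma>
  assumes J: "weight_joining {0..<m} (cycle_w m) V \<beta> \<gamma>" and m: "3 \<le> m"
begin

lemma joining_cycle_eq_0:
  assumes u: "u < m" and v: "v \<in> V" and "u' \<noteq> cyc_succ m u" "u' \<noteq> cyc_pred m u"
  shows "\<gamma> (u, v) (u', v') = 0"
proof (cases "u' < m")
  case True
  have "cycle_w m u u' = 0"
    using cycle_w_eq[OF u True] assms(3,4) by simp
  moreover have "0 < wdeg {0..<m} (cycle_w m) u"
    using wdeg_cycle[OF m u] m by simp
  ultimately show ?thesis
    using joining_eq_0_fst[OF J, of u v u'] u v True by simp
qed (simp add: weight_funD(5)[OF weight_joiningD(1)[OF J]])

lemma joining_cycle_sum_snd:
  assumes u: "u < m" and v: "v \<in> V" and u': "u' = cyc_succ m u \<or> u' = cyc_pred m u"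
  shows "(\<Sum>v'\<in>V. \<gamma> (u, v) (u', v')) = wdeg ({0..<m} \<times> V) \<gamma> (u, v) / 2"
proof -
  have "u' < m"
    using u' cyc_succ_less[of m u] cyc_pred_less[of m u] m by auto
  moreover have "0 < wdeg {0..<m} (cycle_w m) u"
    using wdeg_cycle[OF m u] m by simp
  ultimately show ?thesis
    using joining_sum_snd_eq[OF J, of u v u' "1 / 2"] u v cycle_w_neighbour[OF m u u'] by simp
qed

lemma joining_cycle_sum_fst:
  assumes u: "u < m" and v: "v \<in> V"
  shows "(\<Sum>u'\<in>{0..<m}. \<gamma> (u, v) (u', v')) = \<gamma> (u, v) (cyc_succ m u, v') + \<gamma> (u, v) (cyc_pred m u, v')"
proof (rule sum_eq_two_points)
  show "cyc_succ m u \<in> {0..<m}" "cyc_pred m u \<in> {0..<m}"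
    using m cyc_succ_less cyc_pred_less by auto
  show "cyc_succ m u \<noteq> cyc_pred m u"
    using cyc_succ_neq_pred[OF m u] .
  show "\<gamma> (u, v) (z, v') = 0" if "z \<in> {0..<m}" "z \<noteq> cyc_succ m u" "z \<noteq> cyc_pred m u" for z
    using joining_cycle_eq_0[OF u v] that by blast
qed simp

lemma joining_cycle_leaf:
  assumes u: "u < m" and v: "v \<in> V" and y: "y \<in> V" and pos: "0 < wdeg V \<beta> v"
    and only: "\<forall>y'\<in>V. y' \<noteq> y \<longrightarrow> \<beta> v y' = 0" and u': "u' = cyc_succ m u \<or> u' = cyc_pred m u"
  shows "\<gamma> (u, v) (u', y) = wdeg ({0..<m} \<times> V) \<gamma> (u, v) / 2"
proof -
  have "(\<Sum>v'\<in>V. \<gamma> (u, v) (u', v')) = \<gamma> (u, v) (u', y)"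
  proof (rule sum_eq_one_point)
    show "finite V" using weight_joining_finite(2)[OF J] u by auto
    show "\<gamma> (u, v) (u', z) = 0" if "z \<in> V" "z \<noteq> y" for z
      using joining_eq_0_snd[OF J _ v that(1) pos] only that u by simp
  qed (use y in auto)
  then show ?thesis using joining_cycle_sum_snd[OF u v u'] by simp
qed

lemma joining_cycle_two_nbrs_sum:
  assumes u: "u < m" and v: "v \<in> V" and y: "y1 \<in> V" "y2 \<in> V" "y1 \<noteq> y2" and pos: "0 < wdeg V \<beta> v"
    and only: "\<forall>y\<in>V. y \<noteq> y1 \<and> y \<noteq> y2 \<longrightarrow> \<beta> v y = 0"
    and u': "u' = cyc_succ m u \<or> u' = cyc_pred m u"
  shows "\<gamma> (u, v) (u', y1) + \<gamma> (u, v) (u', y2) = wdeg ({0..<m} \<times> V) \<gamma> (u, v) / 2"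
proof -
  have "(\<Sum>v'\<in>V. \<gamma> (u, v) (u', v')) = \<gamma> (u, v) (u', y1) + \<gamma> (u, v) (u', y2)"
  proof (rule sum_eq_two_points)
    show "finite V" using weight_joining_finite(2)[OF J] u by auto
    show "\<gamma> (u, v) (u', z) = 0" if "z \<in> V" "z \<noteq> y1" "z \<noteq> y2" for z
      using joining_eq_0_snd[OF J _ v that(1) pos] only that u by simp
  qed (use y in auto)
  then show ?thesis using joining_cycle_sum_snd[OF u v u'] by simp
qed

text \<open>If \<open>v\<close> has exactly two neighbours, of equal weight, the joining cannot distinguish
  the two orientations of the cycle relative to them.\<close>

lemma joining_cycle_reflect:
  assumes u: "u < m" and v: "v \<in> V" and y: "y1 \<in> V" "y2 \<in> V" "y1 \<noteq> y2" and pos: "0 < wdeg V \<beta> v"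
    and only: "\<forall>y\<in>V. y \<noteq> y1 \<and> y \<noteq> y2 \<longrightarrow> \<beta> v y = 0" and eq: "\<beta> v y1 = \<beta> v y2"
  shows "\<gamma> (u, v) (cyc_pred m u, y1) = \<gamma> (u, v) (cyc_succ m u, y2)"
proof -
  have "wdeg V \<beta> v = \<beta> v y1 + \<beta> v y2"
    unfolding wdeg_def
  proof (rule sum_eq_two_points)
    show "finite V" using weight_joining_finite(2)[OF J] u by auto
  qed (use y only in auto)
  then have half: "\<beta> v y2 = 1 / 2 * wdeg V \<beta> v"
    using eq by simp
  have "(\<Sum>u'\<in>{0..<m}. \<gamma> (u, v) (u', y2)) = 1 / 2 * wdeg ({0..<m} \<times> V) \<gamma> (u, v)"
    using joining_sum_fst_eq[OF J _ v y(2) pos half] u by simp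
  then have "\<gamma> (u, v) (cyc_succ m u, y2) + \<gamma> (u, v) (cyc_pred m u, y2) = wdeg ({0..<m} \<times> V) \<gamma> (u, v) / 2"
    unfolding joining_cycle_sum_fst[OF u v] by simp
  moreover have "\<gamma> (u, v) (cyc_pred m u, y1) + \<gamma> (u, v) (cyc_pred m u, y2) = wdeg ({0..<m} \<times> V) \<gamma> (u, v) / 2"
    using joining_cycle_two_nbrs_sum[OF u v y pos only] by simp
  ultimately show ?thesis by linarith
qed

end

subsection \<open>Coprime cycles are weakly disjoint\<close>

lemma shift_invariant_const:
  fixes f :: "nat \<Rightarrow> nat \<Rightarrow> 'a"
  assumes cop: "coprime m L" "coprime c L"
    and step: "\<And>u w. u < m \<Longrightarrow> w < L \<Longrightarrow> f u w = f ((u + 1) mod m) ((w + c) mod L)"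
    and u: "u < m" and w: "w < L"
  shows "f u w = f 0 0"
proof -
  have pos: "0 < m" "0 < L"
    using u w by auto
  have orbit: "f (k mod m) ((c * k) mod L) = f 0 0" for k
  proof (induction k)
    case (Suc k)
    have "f (k mod m) ((c * k) mod L) = f ((k mod m + 1) mod m) (((c * k) mod L + c) mod L)"
      using step[of "k mod m" "(c * k) mod L"] pos by simp
    also have "\<dots> = f (Suc k mod m) ((c * Suc k) mod L)"
      by (simp add: mod_Suc_eq mod_add_left_eq mod_add_right_eq add.commute)
    finally show ?case using Suc by simp
  qed simp
  obtain c' where c': "[c * c' = 1] (mod L)"
    using cong_solve_coprime_nat[OF cop(2)] by auto
  obtain k where k: "[k = u] (mod m)" "[k = c' * w] (mod L)"
    using binary_chinese_remainder_nat[OF cop(1)] by blast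
  have "[c * k = c * c' * w] (mod L)"
    using cong_scalar_left[OF k(2), of c] by (simp add: mult.assoc)
  also have "[c * c' * w = 1 * w] (mod L)"
    using cong_scalar_right[OF c'] .
  finally have "(c * k) mod L = w"
    using w by (simp add: cong_def)
  moreover have "k mod m = u"
    using k(1) u by (simp add: cong_def)
  ultimately show ?thesis using orbit[of k] by simp
qed

context
  fixes m n :: nat and \<gamma>
  assumes J: "weight_joining {0..<m} (cycle_w m) {0..<n} (cycle_w n) \<gamma>"
    and m: "3 \<le> m" and n: "3 \<le> n"
begin

lemma joining_cycles_reflect:
  assumes u: "u < m" and v: "v < n"
    and y: "(y1 = cyc_pred n v \<and> y2 = cyc_succ n v) \<or> (y1 = cyc_succ n v \<and> y2 = cyc_pred n v)"
  shows "\<gamma> (u, v) (cyc_pred m u, y1) = \<gamma> (u, v) (cyc_succ m u, y2)"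
proof (rule joining_cycle_reflect[OF J m u])
  show "y1 \<in> {0..<n}" "y2 \<in> {0..<n}" "y1 \<noteq> y2"
    using y cyc_succ_less[of n v] cyc_pred_less[of n v] cyc_succ_neq_pred[OF n v] n by auto
  show "0 < wdeg {0..<n} (cycle_w n) v"
    using wdeg_cycle[OF n v] n by simp
  show "\<forall>y\<in>{0..<n}. y \<noteq> y1 \<and> y \<noteq> y2 \<longrightarrow> cycle_w n v y = 0"
    using y v by (auto simp: cycle_w_eq)
  show "cycle_w n v y1 = cycle_w n v y2"
    using y v cyc_succ_less[of n v] cyc_pred_less[of n v] n by (auto simp: cycle_w_eq)
qed (use v in simp)

lemma joining_cycles_wdeg:
  assumes u: "u < m" and v: "v < n"
  shows "wdeg ({0..<m} \<times> {0..<n}) \<gamma> (u, v)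
    = 2 * (\<gamma> (u, v) (cyc_succ m u, cyc_succ n v) + \<gamma> (u, v) (cyc_succ m u, cyc_pred n v))"
  using joining_cycle_two_nbrs_sum[OF J m u, of v "cyc_succ n v" "cyc_pred n v" "cyc_succ m u"]
    u v n cyc_succ_less[of n v] cyc_pred_less[of n v] cyc_succ_neq_pred[OF n v] wdeg_cycle[OF n v]
  by (simp add: cycle_w_eq)

text \<open>Both diagonal directions of \<open>\<gamma>\<close> are invariant under the simultaneous rotation, which is
  transitive on \<open>{0..<m} \<times> {0..<n}\<close> by the Chinese remainder theorem.\<close>

lemma joining_cycles_wdeg_const:
  assumes cop: "coprime m n" and u: "u < m" and v: "v < n"
  shows "wdeg ({0..<m} \<times> {0..<n}) \<gamma> (u, v) = wdeg ({0..<m} \<times> {0..<n}) \<gamma> (0, 0)"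
proof -
  define A where "A u v = \<gamma> (u, v) (cyc_succ m u, cyc_succ n v)" for u v
  define B where "B u v = \<gamma> (u, v) (cyc_succ m u, cyc_pred n v)" for u v
  have "A u v = A (cyc_succ m u) (cyc_succ n v)" if "u < m" "v < n" for u v
  proof -
    let ?u1 = "cyc_succ m u" and ?v1 = "cyc_succ n v"
    have "A ?u1 ?v1 = \<gamma> (?u1, ?v1) (cyc_pred m ?u1, v)"
      unfolding A_def
      by (rule joining_cycles_reflect[symmetric]) (use that m n in \<open>auto simp: cyc_succ_less cyc_pred_succ\<close>)
    also have "\<dots> = \<gamma> (u, v) (?u1, ?v1)"
      using weight_joining_sym[OF J, of "(?u1, ?v1)" "(u, v)"] that by (simp add: cyc_pred_succ)
    finally show ?thesis by (simp add: A_def)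
  qed
  from shift_invariant_const[where f = A, OF cop coprime_1_left this[unfolded cyc_succ_def] u v]
  have A: "A u v = A 0 0" .
  have "B u v = B (cyc_succ m u) (cyc_pred n v)" if "u < m" "v < n" for u v
  proof -
    let ?u1 = "cyc_succ m u" and ?v1 = "cyc_pred n v"
    have "B ?u1 ?v1 = \<gamma> (?u1, ?v1) (cyc_pred m ?u1, v)"
      unfolding B_def
      by (rule joining_cycles_reflect[symmetric])
        (use that m n in \<open>auto simp: cyc_succ_less cyc_pred_less cyc_succ_pred\<close>)
    also have "\<dots> = \<gamma> (u, v) (?u1, ?v1)"
      using weight_joining_sym[OF J, of "(?u1, ?v1)" "(u, v)"] that by (simp add: cyc_pred_succ)
    finally show ?thesis by (simp add: B_def)
  qed
  from shift_invariant_const[where f = B, OF cop coprime_diff_one_left_nat this[unfolded cyc_succ_def cyc_pred_def] u v]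
  have B: "B u v = B 0 0"
    using n by simp
  have "wdeg ({0..<m} \<times> {0..<n}) \<gamma> (u, v) = 2 * (A u v + B u v)"
    unfolding A_def B_def by (rule joining_cycles_wdeg[OF u v])
  also have "\<dots> = 2 * (A 0 0 + B 0 0)"
    unfolding A B ..
  also have "\<dots> = wdeg ({0..<m} \<times> {0..<n}) \<gamma> (0, 0)"
    unfolding A_def B_def by (rule joining_cycles_wdeg[symmetric]) (use m n in auto)
  finally show ?thesis .
qed

end

theorem weakly_disjoint_cycles_if_coprime:
  assumes m: "3 \<le> m" and n: "3 \<le> n" and cop: "coprime m n"
  shows "weakly_disjoint {0..<m} (cycle_w m) {0..<n} (cycle_w n)"
  unfolding weakly_disjoint_def
proof (intro allI impI ballI)
  fix \<gamma> u v
  assume J: "weight_joining {0..<m} (cycle_w m) {0..<n} (cycle_w n) \<gamma>"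
    and u: "u \<in> {0..<m}" and v: "v \<in> {0..<n}"
  let ?r = "wdeg ({0..<m} \<times> {0..<n}) \<gamma>"
  have const: "?r (x, y) = ?r (0, 0)" if "x < m" "y < n" for x y
    using joining_cycles_wdeg_const[OF J m n cop that] .
  have "1 / real m = (\<Sum>y\<in>{0..<n}. ?r (0, y))"
    using weight_joiningD(2)[OF J, of 0] wdeg_cycle[OF m, of 0] m by simp
  also have "\<dots> = (\<Sum>y\<in>{0..<n}. ?r (0, 0))"
    by (rule sum.cong[OF refl], rule const) (use m in auto)
  finally have "?r (0, 0) = 1 / real m * (1 / real n)"
    using n by (simp add: field_simps)
  then show "?r (u, v) = wdeg {0..<m} (cycle_w m) u * wdeg {0..<n} (cycle_w n) v"
    using const[of u v] u v wdeg_cycle[OF m, of u] wdeg_cycle[OF n, of v] by simp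
qed

subsection \<open>Folding a cycle\<close>

text \<open>The quotient of the cycle on \<open>{0..<d}\<close> by the reflection \<open>i \<mapsto> -i\<close>, onto \<open>{0..d div 2}\<close>.\<close>

definition fold_mod :: "nat \<Rightarrow> nat \<Rightarrow> nat" where
  "fold_mod d i = (if 2 * (i mod d) \<le> d then i mod d else d - i mod d)"

lemma fold_mod_mod [simp]: "fold_mod d (i mod d) = fold_mod d i"
  by (simp add: fold_mod_def)

lemma fold_mod_le: "0 < d \<Longrightarrow> fold_mod d i \<le> d div 2"
  by (auto simp: fold_mod_def)

lemma fold_mod_eq_self: "2 * v \<le> d \<Longrightarrow> v < d \<Longrightarrow> fold_mod d v = v"
  by (simp add: fold_mod_def)

lemma fold_mod_less_eq: "i < d \<Longrightarrow> fold_mod d i = (if 2 * i \<le> d then i else d - i)"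
  by (simp add: fold_mod_def)

lemma fold_mod_diff:
  assumes "i \<le> d"
  shows "fold_mod d (d - i) = fold_mod d i"
proof (cases "i = 0 \<or> i = d")
  case False
  then show ?thesis using assms by (auto simp: fold_mod_less_eq)
qed (auto simp: fold_mod_def)

lemma fold_mod_neighbours_lower:
  assumes d: "2 \<le> d" and a: "a \<le> d div 2"
  shows "fold_mod d a = a"
    and "fold_mod d (cyc_pred d a) = (if a = 0 then 1 else a - 1)"
    and "fold_mod d (cyc_succ d a) = (if a < d div 2 then a + 1 else if odd d then a else a - 1)"
proof -
  have dh: "d = 2 * (d div 2) \<or> d = 2 * (d div 2) + 1" and h1: "1 \<le> d div 2"
    using d by presburger+
  have "a < d" using a d by linarith
  then show "fold_mod d a = a"
    using a by (intro fold_mod_eq_self) auto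
  show "fold_mod d (cyc_pred d a) = (if a = 0 then 1 else a - 1)"
    using \<open>a < d\<close> a d by (auto simp: cyc_pred_eq fold_mod_less_eq)
  show "fold_mod d (cyc_succ d a) = (if a < d div 2 then a + 1 else if odd d then a else a - 1)"
  proof (cases "a < d div 2")
    case True
    then show ?thesis using \<open>a < d\<close> dh by (auto simp: cyc_succ_eq fold_mod_less_eq)
  next
    case False
    then have ah: "a = d div 2" using a by simp
    show ?thesis
    proof (cases "odd d")
      case True
      then have "d = 2 * a + 1" using ah by presburger
      then show ?thesis using h1 by (auto simp: cyc_succ_eq fold_mod_less_eq)
    next
      case False
      then have "d = 2 * a" using ah by presburger
      then show ?thesis using h1 by (auto simp: cyc_succ_eq fold_mod_less_eq)
    qed
  qed
qed

lemma fold_mod_neighbours: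
  assumes d: "2 \<le> d" and a: "a < d"
  defines "h \<equiv> d div 2"
  defines "v \<equiv> fold_mod d a" and "x \<equiv> fold_mod d (cyc_succ d a)" and "y \<equiv> fold_mod d (cyc_pred d a)"
  shows "(v = 0 \<and> x = 1 \<and> y = 1)
    \<or> (0 < v \<and> v < h \<and> (x = v + 1 \<and> y = v - 1 \<or> x = v - 1 \<and> y = v + 1))
    \<or> (v = h \<and> 0 < v \<and> odd d \<and> (x = h \<and> y = h - 1 \<or> x = h - 1 \<and> y = h))
    \<or> (v = h \<and> 0 < v \<and> even d \<and> x = h - 1 \<and> y = h - 1)"
proof (cases "a \<le> h")
  case True
  then show ?thesis
    using fold_mod_neighbours_lower[OF d, of a] d unfolding v_def x_def y_def h_def by auto
next
  case False
  \<comment> \<open>reflect: \<open>d - a\<close> lies in the lower half and has the same fold, with the neighbours swapped\<close>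
  define a' where "a' = d - a"
  have a': "0 < a'" "a' \<le> h" "a' + 1 < d"
    using False a d unfolding a'_def h_def by auto
  have "v = fold_mod d a'"
    using fold_mod_diff[of a d] a unfolding v_def a'_def by simp
  moreover have "x = fold_mod d (cyc_pred d a')"
  proof (cases "a + 1 = d")
    case True
    then show ?thesis using a' by (simp add: x_def a'_def cyc_succ_eq cyc_pred_eq)
  next
    case False
    then have "cyc_succ d a = d - cyc_pred d a'"
      using a a' by (simp add: a'_def cyc_succ_eq cyc_pred_eq)
    then show ?thesis
      using fold_mod_diff[of "cyc_pred d a'" d] cyc_pred_less[of d a'] d by (simp add: x_def)
  qed
  moreover have "y = fold_mod d (cyc_succ d a')"
  proof -
    have "d - cyc_succ d a' = cyc_pred d a"
      using a a' False by (simp add: cyc_pred_eq cyc_succ_eq a'_def h_def)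
    then show ?thesis
      using fold_mod_diff[of "cyc_succ d a'" d] cyc_succ_less[of d a'] d unfolding y_def by simp
  qed
  ultimately show ?thesis
    using fold_mod_neighbours_lower[OF d, of a'] a' d unfolding h_def by auto
qed

definition path_mirror :: "nat \<Rightarrow> nat \<Rightarrow> nat \<Rightarrow> nat \<Rightarrow> bool" where
  "path_mirror N v x y \<longleftrightarrow> (v = 0 \<and> x = 1 \<and> y = 1)
     \<or> (0 < v \<and> v < N \<and> (x = v - 1 \<and> y = v + 1 \<or> x = v + 1 \<and> y = v - 1))
     \<or> (v = N \<and> x = N - 1 \<and> y = N - 1)"

lemma path_mirror_fold_mod:
  assumes "1 \<le> N" "a < 2 * N"
  shows "path_mirror N (fold_mod (2 * N) a) (fold_mod (2 * N) (cyc_pred (2 * N) a))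
    (fold_mod (2 * N) (cyc_succ (2 * N) a))"
  using fold_mod_neighbours[of "2 * N" a] assms unfolding path_mirror_def by auto

lemma fold_mod_hits_edge:
  assumes "v \<le> N" "v' \<le> N" "v' = v + 1 \<or> v = v' + 1"
  obtains a where "a < 2 * N" "fold_mod (2 * N) a = v" "fold_mod (2 * N) (cyc_succ (2 * N) a) = v'"
  using assms(3)
proof
  assume "v' = v + 1"
  then show thesis
    using that[of v] assms by (simp add: fold_mod_less_eq cyc_succ_eq)
next
  assume v: "v = v' + 1"
  have "fold_mod (2 * N) (cyc_succ (2 * N) (2 * N - v)) = v'"
    using v assms(1) by (cases "v' = 0") (auto simp: fold_mod_less_eq cyc_succ_eq)
  moreover have "fold_mod (2 * N) (2 * N - v) = v"
    using v assms(1) by (auto simp: fold_mod_less_eq)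
  ultimately show thesis
    using that[of "2 * N - v"] v assms(1) by simp
qed

subsection \<open>Coprime cycle and path are strongly disjoint\<close>

lemma path_w_Suc_eq:
  "v < Suc N \<Longrightarrow> v' < Suc N \<Longrightarrow>
    path_w (Suc N) v v' = (if v' = v + 1 \<or> v = v' + 1 then 1 / (2 * real N) else 0)"
  using path_w_eq[of v "Suc N" v'] by simp

lemma wdeg_path_Suc_pos: "1 \<le> N \<Longrightarrow> v < Suc N \<Longrightarrow> 0 < wdeg {0..<Suc N} (path_w (Suc N)) v"
  using wdeg_path[of v "Suc N"] by (cases "v = 0") auto

context
  fixes m N :: nat and \<gamma>
  assumes J: "weight_joining {0..<m} (cycle_w m) {0..<Suc N} (path_w (Suc N)) \<gamma>"
    and m: "3 \<le> m" and N: "1 \<le> N"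
begin

lemma joining_cycle_path_start:
  assumes "u < m" "u' = cyc_succ m u \<or> u' = cyc_pred m u"
  shows "\<gamma> (u, 0) (u', 1) = wdeg ({0..<m} \<times> {0..<Suc N}) \<gamma> (u, 0) / 2"
  by (rule joining_cycle_leaf[OF J m]) (use assms N in \<open>auto simp: path_w_Suc_eq wdeg_path_Suc_pos\<close>)

lemma joining_cycle_path_mirror:
  assumes u: "u < m" and mirror: "path_mirror N v x y"
  shows "\<gamma> (u, v) (cyc_pred m u, x) = \<gamma> (u, v) (cyc_succ m u, y)"
proof -
  consider (start) "v = 0" "x = 1" "y = 1"
    | (inner) "0 < v" "v < N" "x = v - 1 \<and> y = v + 1 \<or> x = v + 1 \<and> y = v - 1"
    | (final) "v = N" "x = N - 1" "y = N - 1"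
    using mirror unfolding path_mirror_def by blast
  then show ?thesis
  proof cases
    case start
    then show ?thesis
      using joining_cycle_path_start[OF u, of "cyc_pred m u"] joining_cycle_path_start[OF u, of "cyc_succ m u"]
      by simp
  next
    case inner
    show ?thesis
      by (rule joining_cycle_reflect[OF J m u])
        (use inner N in \<open>auto simp: path_w_Suc_eq wdeg_path_Suc_pos\<close>)
  next
    case final
    have "\<gamma> (u, N) (u', N - 1) = wdeg ({0..<m} \<times> {0..<Suc N}) \<gamma> (u, N) / 2"
      if "u' = cyc_succ m u \<or> u' = cyc_pred m u" for u'
      by (rule joining_cycle_leaf[OF J m u]) (use that N in \<open>auto simp: path_w_Suc_eq wdeg_path_Suc_pos\<close>)
    from this[of "cyc_pred m u"] this[of "cyc_succ m u"] show ?thesis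
      using final by simp
  qed
qed

text \<open>Unfolding the path onto the cycle \<open>{0..<2 * N}\<close> via \<open>fold_mod\<close> turns the mirror
  relation into invariance under a simultaneous rotation of both cycles.\<close>

lemma joining_cycle_path_rotate:
  assumes u: "u < m" and a: "a < 2 * N"
  defines "f \<equiv> fold_mod (2 * N)" and "u1 \<equiv> cyc_succ m u" and "a1 \<equiv> cyc_succ (2 * N) a"
  shows "\<gamma> (u1, f a1) (cyc_succ m u1, f (cyc_succ (2 * N) a1)) = \<gamma> (u, f a) (u1, f a1)"
proof -
  have "\<gamma> (u1, f a1) (cyc_succ m u1, f (cyc_succ (2 * N) a1)) = \<gamma> (u1, f a1) (cyc_pred m u1, f (cyc_pred (2 * N) a1))"
    unfolding f_def
    by (rule joining_cycle_path_mirror[symmetric])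
      (use path_mirror_fold_mod[of N a1] m N in \<open>simp_all add: u1_def a1_def cyc_succ_less\<close>)
  also have "\<dots> = \<gamma> (u, f a) (u1, f a1)"
    using weight_joining_sym[OF J, of "(u1, f a1)" "(u, f a)"] u a
    by (simp add: u1_def a1_def cyc_pred_succ)
  finally show ?thesis .
qed

lemma joining_cycle_path_edge_const:
  assumes cop: "coprime m (2 * N)"
  obtains e where "\<And>u v v'. u < m \<Longrightarrow> v \<le> N \<Longrightarrow> v' \<le> N \<Longrightarrow> v' = v + 1 \<or> v = v' + 1 \<Longrightarrow>
    \<gamma> (u, v) (cyc_succ m u, v') = e"
proof -
  define E where "E u a = \<gamma> (u, fold_mod (2 * N) a) (cyc_succ m u, fold_mod (2 * N) (cyc_succ (2 * N) a))"
    for u a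
  have "E u a = E (cyc_succ m u) (cyc_succ (2 * N) a)" if "u < m" "a < 2 * N" for u a
    using joining_cycle_path_rotate[OF that] by (simp add: E_def)
  from shift_invariant_const[where f = E, OF cop coprime_1_left this[unfolded cyc_succ_def]]
  have E: "E u a = E 0 0" if "u < m" "a < 2 * N" for u a
    using that by blast
  show thesis
  proof (rule that[of "E 0 0"])
    fix u v v' assume u: "u < m" and edge: "v \<le> N" "v' \<le> N" "v' = v + 1 \<or> v = v' + 1"
    obtain a where "a < 2 * N" "fold_mod (2 * N) a = v" "fold_mod (2 * N) (cyc_succ (2 * N) a) = v'"
      using fold_mod_hits_edge[OF edge] .
    then show "\<gamma> (u, v) (cyc_succ m u, v') = E 0 0"
      using E[of u a] u by (simp add: E_def)
  qed
qed

lemma joining_cycle_path_eq_tensor: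
  assumes cop: "coprime m (2 * N)" and u: "u < m" and v: "v \<le> N" and u': "u' < m" and v': "v' \<le> N"
  shows "\<gamma> (u, v) (u', v') = cycle_w m u u' * path_w (Suc N) v v'"
proof -
  obtain e where succ: "\<And>u v v'. u < m \<Longrightarrow> v \<le> N \<Longrightarrow> v' \<le> N \<Longrightarrow> v' = v + 1 \<or> v = v' + 1 \<Longrightarrow>
      \<gamma> (u, v) (cyc_succ m u, v') = e"
    using joining_cycle_path_edge_const[OF cop] by blast
  have pred: "\<gamma> (u, v) (cyc_pred m u, v') = e"
    if "u < m" "v \<le> N" "v' \<le> N" "v' = v + 1 \<or> v = v' + 1" for u v v'
    using weight_joining_sym[OF J, of "(u, v)"] succ[of "cyc_pred m u" v' v] that m
    by (auto simp: cyc_succ_pred cyc_pred_less)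
  have "wdeg ({0..<m} \<times> {0..<Suc N}) \<gamma> (x, 0) = 2 * e" if "x < m" for x
    using joining_cycle_path_start[OF that, of "cyc_succ m x"] succ[OF that, of 0 1] N by simp
  then have "real m * (2 * e) = (\<Sum>x\<in>{0..<m}. wdeg ({0..<m} \<times> {0..<Suc N}) \<gamma> (x, 0))"
    by simp
  also have "\<dots> = 1 / (2 * real N)"
    using weight_joiningD(3)[OF J, of 0] wdeg_path[of 0 "Suc N"] N by simp
  finally have e: "e = 1 / (2 * real m) * (1 / (2 * real N))"
    using m N by (simp add: field_simps)
  show ?thesis
  proof (cases "u' = cyc_succ m u \<or> u' = cyc_pred m u")
    case True
    then have "cycle_w m u u' = 1 / (2 * real m)"
      using cycle_w_eq[OF u u'] by simp
    then show ?thesis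
      using True succ[OF u v v'] pred[OF u v v'] joining_eq_0_snd[OF J, of u v v' u'] e u v v' N
      by (auto simp: path_w_Suc_eq wdeg_path_Suc_pos)
  qed (use joining_cycle_eq_0[OF J m u, of v u' v'] u u' v in \<open>auto simp: cycle_w_eq\<close>)
qed

end

theorem strongly_disjoint_cycle_path_if_coprime:
  assumes m: "3 \<le> m" and n': "2 \<le> n'" and cop: "coprime m (2 * (n' - 1))"
  shows "strongly_disjoint {0..<m} (cycle_w m) {0..<n'} (path_w n')"
proof -
  obtain N where n'_eq: "n' = Suc N" and N: "1 \<le> N"
    using n' by (cases n') auto
  have "\<gamma> x y = tensor_weight (cycle_w m) (path_w (Suc N)) x y"
    if J: "weight_joining {0..<m} (cycle_w m) {0..<Suc N} (path_w (Suc N)) \<gamma>" for \<gamma> x y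
  proof -
    obtain u v u' v' where xy: "x = (u, v)" "y = (u', v')"
      by fastforce
    show ?thesis
    proof (cases "u < m \<and> v \<le> N \<and> u' < m \<and> v' \<le> N")
      case True
      then show ?thesis
        using joining_cycle_path_eq_tensor[OF J m N, of u v u' v'] cop n'_eq xy by (simp add: tensor_weight_def)
    next
      case False
      then show ?thesis
        using weight_funD(4,5)[OF weight_joiningD(1)[OF J]] xy
        by (auto simp: tensor_weight_def cycle_w_def path_w_def)
    qed
  qed
  then show ?thesis
    unfolding strongly_disjoint_def n'_eq by blast
qed

subsection \<open>The folded cycle is a common factor\<close>

text \<open>On a connected factor with positive degrees the local condition already forces the
  degree condition: along every edge the fibre masses are proportional to the degrees.\<close>

lemma factor_map_if_local:
  fixes W :: "nat set"
  assumes wU: "weight_fun U \<alpha>" and wW: "weight_fun W \<kappa>" and W: "W = {0..<k}" and im: "\<phi> ` U = W"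
    and edge: "\<And>j. j + 1 < k \<Longrightarrow> 0 < \<kappa> j (j + 1)"
    and pos: "\<And>w. w \<in> W \<Longrightarrow> 0 < wdeg W \<kappa> w"
    and local: "\<And>v v' u. v \<in> W \<Longrightarrow> v' \<in> W \<Longrightarrow> u \<in> U \<Longrightarrow> \<phi> u = v \<Longrightarrow>
          wdeg W \<kappa> v * (\<Sum>u'\<in>{u'\<in>U. \<phi> u' = v'}. \<alpha> u u') = wdeg U \<alpha> u * \<kappa> v v'"
  shows "factor_map W \<kappa> U \<alpha> \<phi>"
proof -
  define P where "P v = (\<Sum>u\<in>{u\<in>U. \<phi> u = v}. wdeg U \<alpha> u)" for v
  define T where "T v v' = (\<Sum>u\<in>{u\<in>U. \<phi> u = v}. \<Sum>u'\<in>{u'\<in>U. \<phi> u' = v'}. \<alpha> u u')" for v v'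
  have finU: "finite U" using weight_funD(1)[OF wU] .
  have T: "T v v' = P v * \<kappa> v v' / wdeg W \<kappa> v" if "v \<in> W" "v' \<in> W" for v v'
  proof -
    have "T v v' = (\<Sum>u\<in>{u\<in>U. \<phi> u = v}. wdeg U \<alpha> u * \<kappa> v v' / wdeg W \<kappa> v)"
      unfolding T_def
      by (rule sum.cong[OF refl]) (use local[OF that] pos[OF that(1)] in \<open>auto simp: field_simps\<close>)
    then show ?thesis by (simp add: P_def sum_distrib_right sum_divide_distrib)
  qed
  have T_sym: "T v v' = T v' v" for v v'
    unfolding T_def using weight_funD(3)[OF wU] by (subst sum.swap) simp
  have step: "P j / wdeg W \<kappa> j = P (j + 1) / wdeg W \<kappa> (j + 1)" if "j + 1 < k" for j
  proof -
    have jW: "j \<in> W" "j + 1 \<in> W" using that W by auto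
    have "\<kappa> j (j + 1) * (P j / wdeg W \<kappa> j) = \<kappa> j (j + 1) * (P (j + 1) / wdeg W \<kappa> (j + 1))"
      using T[OF jW] T[OF jW(2,1)] T_sym[of j "j + 1"] weight_funD(3)[OF wW, of j "j + 1"]
      by (simp add: mult.commute)
    then show ?thesis by (metis edge[OF that] less_irrefl mult_left_cancel)
  qed
  have const: "P j / wdeg W \<kappa> j = P 0 / wdeg W \<kappa> 0" if "j < k" for j
    using that by (induction j) (simp_all add: step)
  define c where "c = P 0 / wdeg W \<kappa> 0"
  have P: "P j = c * wdeg W \<kappa> j" if "j \<in> W" for j
    using const[of j] pos[OF that] that W by (simp add: c_def field_simps)
  have "1 = sum P W"
    unfolding P_def using sum.group[OF finU, of W \<phi> "wdeg U \<alpha>"] im weight_funD(1)[OF wW] sum_wdeg[OF wU]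
    by auto
  also have "\<dots> = c"
    using P sum_wdeg[OF wW] by (simp add: sum_distrib_left[symmetric])
  finally show ?thesis
    unfolding factor_map_def using im P local by (auto simp: P_def)
qed

text \<open>The cycle \<open>C_d\<close> folded onto the path \<open>{0..d div 2}\<close>; for odd \<open>d\<close> the middle edge of the
  cycle becomes a loop at \<open>d div 2\<close>.\<close>

definition folded_cycle_w :: "nat \<Rightarrow> nat \<Rightarrow> nat \<Rightarrow> real" where
  "folded_cycle_w d i j = (if i \<le> d div 2 \<and> j \<le> d div 2 \<and>
     (j = i + 1 \<or> i = j + 1 \<or> (odd d \<and> i = d div 2 \<and> j = d div 2)) then 1 / real d else 0)"

lemma wdeg_folded_cycle:
  assumes v: "v \<le> d div 2"
  shows "wdeg {0..<d div 2 + 1} (folded_cycle_w d) v =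
    (of_bool (v + 1 \<le> d div 2) + of_bool (0 < v) + of_bool (odd d \<and> v = d div 2)) / real d"
proof -
  let ?W = "{0..<d div 2 + 1}"
  have "wdeg ?W (folded_cycle_w d) v = (\<Sum>j\<in>?W. of_bool (j = v + 1) / real d
      + of_bool (0 < v \<and> j = v - 1) / real d + of_bool (odd d \<and> v = d div 2 \<and> j = v) / real d)"
    unfolding wdeg_def by (rule sum.cong[OF refl]) (use v in \<open>auto simp: folded_cycle_w_def\<close>)
  also have "\<dots> = (of_bool (v + 1 \<le> d div 2) + of_bool (0 < v) + of_bool (odd d \<and> v = d div 2)) / real d"
    using v by (auto simp: sum.distrib add_divide_distrib sum.If_cases simp flip: sum_divide_distrib)
  finally show ?thesis .
qed

lemma wdeg_folded_cycle_pos: "2 \<le> d \<Longrightarrow> v \<le> d div 2 \<Longrightarrow> 0 < wdeg {0..<d div 2 + 1} (folded_cycle_w d) v"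
  using wdeg_folded_cycle[of v d] by (cases "v = 0") auto

lemma weight_fun_folded_cycle:
  assumes d: "2 \<le> d"
  shows "weight_fun {0..<d div 2 + 1} (folded_cycle_w d)"
proof (rule weight_funI_wdeg)
  let ?h = "d div 2"
  have count: "(\<Sum>x\<in>{0..<?h + 1}. of_bool (P x) :: real) = real (card B)"
    if "{0..<?h + 1} \<inter> {x. P x} = B" for P B
    by (subst sum_of_bool_eq) (use that in auto)
  have "sum (wdeg {0..<?h + 1} (folded_cycle_w d)) {0..<?h + 1}
      = (\<Sum>x\<in>{0..<?h + 1}. of_bool (x + 1 \<le> ?h) + of_bool (0 < x) + of_bool (odd d \<and> x = ?h)) / real d"
    unfolding sum_divide_distrib by (intro sum.cong refl) (subst wdeg_folded_cycle, auto)
  also have "(\<Sum>x\<in>{0..<?h + 1}. of_bool (x + 1 \<le> ?h) + of_bool (0 < x) + of_bool (odd d \<and> x = ?h))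
      = real (card {0..<?h}) + real (card {1..<?h + 1}) + real (card (if odd d then {?h} else {}))"
    unfolding sum.distrib by (intro arg_cong2[where f = "(+)"] count) auto
  also have "\<dots> = real (?h + ?h + of_bool (odd d))"
    by simp
  also have "?h + ?h + of_bool (odd d) = d"
    by (cases "odd d") (simp_all, presburger+)
  finally show "sum (wdeg {0..<?h + 1} (folded_cycle_w d)) {0..<?h + 1} = 1"
    using d by simp
qed (auto simp: folded_cycle_w_def)

lemma nontrivial_folded_cycle:
  assumes d: "2 \<le> d"
  shows "nontrivial_graph {0..<d div 2 + 1} (folded_cycle_w d)"
proof -
  have "1 \<le> d div 2" using d by simp
  then show ?thesis
    unfolding nontrivial_graph_def using wdeg_folded_cycle_pos[OF d, of 0] wdeg_folded_cycle_pos[OF d, of 1]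
    by (intro bexI[of _ 0] bexI[of _ 1]) auto
qed

lemma cyc_succ_mod: "d dvd m \<Longrightarrow> cyc_succ m u mod d = cyc_succ d (u mod d)"
  by (simp add: cyc_succ_def mod_mod_cancel mod_Suc_eq)

lemma cyc_pred_mod:
  assumes "d dvd m" "0 < m"
  shows "cyc_pred m u mod d = cyc_pred d (u mod d)"
proof -
  obtain t where t: "m = d * t" using assms(1) ..
  then have "0 < t" using assms(2) by simp
  then have "u + (m - 1) = (u + (d - 1)) + d * (t - 1)"
    using t assms(2) by (cases t) (auto simp: algebra_simps)
  then have "(u + (m - 1)) mod d = (u + (d - 1)) mod d"
    by (metis mod_mult_self2)
  then show ?thesis
    using assms by (simp add: cyc_pred_def mod_mod_cancel mod_add_left_eq)
qed

lemma fold_mod_Suc: "fold_mod d (j + 1) = fold_mod d (cyc_succ d (j mod d))"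
  by (metis cyc_succ_def fold_mod_mod mod_Suc_eq Suc_eq_plus1)

lemma fold_mod_diff_1:
  assumes "0 < d" "0 < j"
  shows "fold_mod d (j - 1) = fold_mod d (cyc_pred d (j mod d))"
proof -
  have "j + (d - 1) = (j - 1) + d" using assms by simp
  then have "(j - 1) mod d = cyc_pred d (j mod d)"
    by (simp add: cyc_pred_def mod_add_left_eq)
  then show ?thesis by (metis fold_mod_mod)
qed

lemma fold_mod_image:
  assumes "2 \<le> d" "d div 2 < k"
  shows "fold_mod d ` {0..<k} = {0..<d div 2 + 1}"
proof
  show "fold_mod d ` {0..<k} \<subseteq> {0..<d div 2 + 1}"
    using fold_mod_le[of d] assms(1) by (auto simp: less_Suc_eq_le)
  show "{0..<d div 2 + 1} \<subseteq> fold_mod d ` {0..<k}"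
  proof
    fix v assume "v \<in> {0..<d div 2 + 1}"
    then have "fold_mod d v = v" "v \<in> {0..<k}"
      using assms by (auto intro: fold_mod_eq_self)
    then show "v \<in> fold_mod d ` {0..<k}" by (metis image_eqI)
  qed
qed

lemma folded_cycle_w_fold_mod:
  assumes d: "2 \<le> d" and a: "a < d" and v': "v' \<le> d div 2"
  shows "wdeg {0..<d div 2 + 1} (folded_cycle_w d) (fold_mod d a) *
      (of_bool (fold_mod d (cyc_succ d a) = v') + of_bool (fold_mod d (cyc_pred d a) = v')) / 2
    = folded_cycle_w d (fold_mod d a) v'"
proof -
  let ?h = "d div 2" and ?v = "fold_mod d a"
    and ?x = "fold_mod d (cyc_succ d a)" and ?y = "fold_mod d (cyc_pred d a)"
  have v: "?v \<le> ?h" using fold_mod_le d by simp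
  have h1: "1 \<le> ?h" using d by simp
  have S: "wdeg {0..<?h + 1} (folded_cycle_w d) ?v =
      (of_bool (?v + 1 \<le> ?h) + of_bool (0 < ?v) + of_bool (odd d \<and> ?v = ?h)) / real d"
    using wdeg_folded_cycle[OF v] .
  have F: "folded_cycle_w d ?v v' =
      (of_bool (v' = ?v + 1) + of_bool (?v = v' + 1) + of_bool (odd d \<and> ?v = ?h \<and> v' = ?h)) / real d"
    using v v' by (auto simp: folded_cycle_w_def)
  from fold_mod_neighbours[OF d a] show ?thesis
  proof (elim disjE conjE)
    assume "?v = 0" "?x = 1" "?y = 1"
    then show ?thesis unfolding S F using h1 by simp
  next
    assume "0 < ?v" "?v < ?h" "?x = ?v + 1" "?y = ?v - 1"
    then show ?thesis unfolding S F using h1 by (auto simp: field_simps)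
  next
    assume "0 < ?v" "?v < ?h" "?x = ?v - 1" "?y = ?v + 1"
    then show ?thesis unfolding S F using h1 by (auto simp: field_simps)
  next
    assume "?v = ?h" "0 < ?v" "odd d" "?x = ?h" "?y = ?h - 1"
    then show ?thesis unfolding S F using h1 v' by (auto simp: field_simps)
  next
    assume "?v = ?h" "0 < ?v" "odd d" "?x = ?h - 1" "?y = ?h"
    then show ?thesis unfolding S F using h1 v' by (auto simp: field_simps)
  next
    assume "?v = ?h" "0 < ?v" "even d" "?x = ?h - 1" "?y = ?h - 1"
    then show ?thesis unfolding S F using h1 v' by (auto simp: field_simps)
  qed
qed

lemma factor_map_cycle_fold:
  assumes m: "3 \<le> m" and d: "2 \<le> d" and dm: "d dvd m"
  shows "factor_map {0..<d div 2 + 1} (folded_cycle_w d) {0..<m} (cycle_w m) (fold_mod d)"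
proof (rule factor_map_if_local[OF weight_fun_cycle[OF m] weight_fun_folded_cycle[OF d] refl])
  show "fold_mod d ` {0..<m} = {0..<d div 2 + 1}"
    using fold_mod_image[OF d] dvd_imp_le[OF dm] m by simp
  show "0 < folded_cycle_w d j (j + 1)" if "j + 1 < d div 2 + 1" for j
    using that by (simp add: folded_cycle_w_def)
  show "0 < wdeg {0..<d div 2 + 1} (folded_cycle_w d) w" if "w \<in> {0..<d div 2 + 1}" for w
    using wdeg_folded_cycle_pos[OF d] that by simp
  fix v v' u
  assume v': "v' \<in> {0..<d div 2 + 1}" and u: "u \<in> {0..<m}" and fu: "fold_mod d u = v"
  let ?F = "{u' \<in> {0..<m}. fold_mod d u' = v'}"
  have "u mod d < d" using d by simp
  have succ: "fold_mod d (cyc_succ m u) = fold_mod d (cyc_succ d (u mod d))"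
    by (metis fold_mod_mod cyc_succ_mod[OF dm])
  have pred: "fold_mod d (cyc_pred m u) = fold_mod d (cyc_pred d (u mod d))"
    using m by (metis fold_mod_mod cyc_pred_mod[OF dm] gr0I not_numeral_le_zero)
  have "(\<Sum>u'\<in>?F. cycle_w m u u') = (of_bool (cyc_succ m u \<in> ?F) + of_bool (cyc_pred m u \<in> ?F)) / (2 * real m)"
    by (rule sum_cycle_w[OF m]) (use u in auto)
  also have "cyc_succ m u \<in> ?F \<longleftrightarrow> fold_mod d (cyc_succ d (u mod d)) = v'"
    using succ cyc_succ_less[of m u] m by auto
  also have "cyc_pred m u \<in> ?F \<longleftrightarrow> fold_mod d (cyc_pred d (u mod d)) = v'"
    using pred cyc_pred_less[of m u] m by auto
  finally have sum: "(\<Sum>u'\<in>?F. cycle_w m u u') =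
      (of_bool (fold_mod d (cyc_succ d (u mod d)) = v') + of_bool (fold_mod d (cyc_pred d (u mod d)) = v'))
      / (2 * real m)" .
  have local: "wdeg {0..<d div 2 + 1} (folded_cycle_w d) v *
      (of_bool (fold_mod d (cyc_succ d (u mod d)) = v') + of_bool (fold_mod d (cyc_pred d (u mod d)) = v')) / 2
    = folded_cycle_w d v v'"
    using folded_cycle_w_fold_mod[OF d \<open>u mod d < d\<close>, of v'] v' fu fold_mod_mod[of d u] by simp
  show "wdeg {0..<d div 2 + 1} (folded_cycle_w d) v * (\<Sum>u'\<in>?F. cycle_w m u u')
      = wdeg {0..<m} (cycle_w m) u * folded_cycle_w d v v'"
    unfolding sum wdeg_cycle[OF m u[simplified]] local[symmetric] using m by (simp add: field_simps)
qed

lemma fold_mod_succ_eq_pred: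
  assumes d: "2 \<le> d" and a: "a < d" and end_point: "a = 0 \<or> 2 * a = d"
  shows "fold_mod d (cyc_succ d a) = fold_mod d (cyc_pred d a)"
proof -
  have "fold_mod d a = 0 \<or> (fold_mod d a = d div 2 \<and> even d)"
    using end_point a by (auto simp: fold_mod_def)
  then show ?thesis
    using fold_mod_neighbours[OF d a] by auto
qed

lemma mod_cases_if_dvd_double:
  fixes d N :: nat
  assumes "0 < d" "d dvd 2 * N"
  shows "N mod d = 0 \<or> 2 * (N mod d) = d"
proof -
  have "d dvd 2 * (N mod d)"
    using assms(2) by (simp add: dvd_eq_mod_eq_0 mod_mult_right_eq)
  then obtain t where t: "2 * (N mod d) = d * t" ..
  have "d * t < d * 2"
    using t mod_less_divisor[OF assms(1), of N] by linarith
  then have "t = 0 \<or> t = 1"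
    by auto
  then show ?thesis using t by auto
qed

text \<open>The path unfolds onto the cycle \<open>C_2N\<close>; its end points, whose single edges carry their
  whole weight, fold onto vertices where the two cycle neighbours fold together.\<close>

lemma path_fold_local:
  assumes n': "n' = Suc N" "1 \<le> N" and d: "2 \<le> d" and dN: "d dvd 2 * N"
    and j: "j < n'" and v': "v' \<le> d div 2"
  shows "wdeg {0..<d div 2 + 1} (folded_cycle_w d) (fold_mod d j) *
      (\<Sum>j'\<in>{j' \<in> {0..<n'}. fold_mod d j' = v'}. path_w n' j j')
    = wdeg {0..<n'} (path_w n') j * folded_cycle_w d (fold_mod d j) v'"
proof -
  let ?F = "{j' \<in> {0..<n'}. fold_mod d j' = v'}" and ?s = "wdeg {0..<d div 2 + 1} (folded_cycle_w d) (fold_mod d j)"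
  define a where "a = j mod d"
  have a: "a < d" and fa: "fold_mod d a = fold_mod d j"
    using d by (simp_all add: a_def)
  have "?F \<subseteq> {0..<n'}" by auto
  from sum_path_w[OF j this] have sum: "(\<Sum>j'\<in>?F. path_w n' j j') =
      (of_bool (j + 1 \<in> ?F) + of_bool (0 < j \<and> j - 1 \<in> ?F)) / (2 * real N)"
    using n' by simp
  have mem_succ: "j + 1 \<in> ?F \<longleftrightarrow> j + 1 < n' \<and> fold_mod d (cyc_succ d a) = v'"
    using fold_mod_Suc[of d j] by (auto simp: a_def)
  have mem_pred: "j - 1 \<in> ?F \<longleftrightarrow> fold_mod d (cyc_pred d a) = v'" if "0 < j"
    using fold_mod_diff_1[of d j] that j d by (auto simp: a_def)
  have p: "wdeg {0..<n'} (path_w n') j = (of_bool (j + 1 < n') + of_bool (0 < j)) / (2 * real N)"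
    using wdeg_path[OF j] n' by simp
  have local: "?s * (of_bool (fold_mod d (cyc_succ d a) = v') + of_bool (fold_mod d (cyc_pred d a) = v')) / 2
      = folded_cycle_w d (fold_mod d j) v'"
    using folded_cycle_w_fold_mod[OF d a v'] fa by simp
  consider (first) "j = 0" | (inner) "0 < j" "j < N" | (last) "j = N"
    using j n' by linarith
  then show ?thesis
  proof cases
    case first
    have "fold_mod d (cyc_succ d a) = fold_mod d (cyc_pred d a)"
      using fold_mod_succ_eq_pred[OF d a] first by (simp add: a_def)
    then show ?thesis
      using local first n' unfolding sum p mem_succ by (simp add: field_simps)
  next
    case inner
    then show ?thesis
      using local n' unfolding sum p mem_succ mem_pred[OF inner(1)] by (simp add: field_simps)
  next
    case last
    have "a = 0 \<or> 2 * a = d"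
      using mod_cases_if_dvd_double[OF _ dN] d last by (simp add: a_def)
    then have "fold_mod d (cyc_succ d a) = fold_mod d (cyc_pred d a)"
      using fold_mod_succ_eq_pred[OF d a] by simp
    moreover have "0 < j" using last n' by simp
    ultimately show ?thesis
      using local last n' unfolding sum p mem_succ mem_pred[OF \<open>0 < j\<close>] by (simp add: field_simps)
  qed
qed

lemma factor_map_path_fold:
  assumes n': "2 \<le> n'" and d: "2 \<le> d" and dN: "d dvd 2 * (n' - 1)"
  shows "factor_map {0..<d div 2 + 1} (folded_cycle_w d) {0..<n'} (path_w n') (fold_mod d)"
proof (rule factor_map_if_local[OF weight_fun_path[OF n'] weight_fun_folded_cycle[OF d] refl])
  obtain N where N: "n' = Suc N" "1 \<le> N"
    using n' by (cases n') auto
  have "d div 2 < n'"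
    using dvd_imp_le[OF dN] N d by simp
  then show "fold_mod d ` {0..<n'} = {0..<d div 2 + 1}"
    using fold_mod_image[OF d] by simp
  show "0 < folded_cycle_w d j (j + 1)" if "j + 1 < d div 2 + 1" for j
    using that by (simp add: folded_cycle_w_def)
  show "0 < wdeg {0..<d div 2 + 1} (folded_cycle_w d) w" if "w \<in> {0..<d div 2 + 1}" for w
    using wdeg_folded_cycle_pos[OF d] that by simp
  show "wdeg {0..<d div 2 + 1} (folded_cycle_w d) v * (\<Sum>j'\<in>{j' \<in> {0..<n'}. fold_mod d j' = v'}. path_w n' j j')
      = wdeg {0..<n'} (path_w n') j * folded_cycle_w d v v'"
    if "v' \<in> {0..<d div 2 + 1}" "j \<in> {0..<n'}" "fold_mod d j = v" for v v' j
    using path_fold_local[OF N d _, of j v'] dN N that by auto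
qed

lemma common_factor_folded_cycle:
  assumes wU: "weight_fun U \<alpha>" and wV: "weight_fun V \<beta>" and d: "2 \<le> d"
    and "factor_map {0..<d div 2 + 1} (folded_cycle_w d) U \<alpha> \<phi>"
    and "factor_map {0..<d div 2 + 1} (folded_cycle_w d) V \<beta> \<psi>"
  shows "has_nontrivial_common_factor U \<alpha> V \<beta>"
  unfolding has_nontrivial_common_factor_def graph_factor_iff_factor_map
  using weight_fun_folded_cycle[OF d] nontrivial_folded_cycle[OF d] assms(4,5) by blast

lemma two_le_gcd_if_not_coprime: "\<not> coprime a b \<Longrightarrow> 0 < a \<Longrightarrow> 2 \<le> gcd a (b :: nat)"
  using coprime_iff_gcd_eq_1[of a b] gcd_pos_nat[of a b] by linarith

lemma common_factor_cycles_if_not_coprime: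
  assumes m: "3 \<le> m" and n: "3 \<le> n" and "\<not> coprime m n"
  shows "has_nontrivial_common_factor {0..<m} (cycle_w m) {0..<n} (cycle_w n)"
proof -
  have d: "2 \<le> gcd m n"
    using two_le_gcd_if_not_coprime assms by simp
  show ?thesis
    by (rule common_factor_folded_cycle[OF weight_fun_cycle[OF m] weight_fun_cycle[OF n] d
          factor_map_cycle_fold[OF m d] factor_map_cycle_fold[OF n d]]) simp_all
qed

lemma common_factor_cycle_path_if_not_coprime:
  assumes m: "3 \<le> m" and n': "2 \<le> n'" and "\<not> coprime m (2 * (n' - 1))"
  shows "has_nontrivial_common_factor {0..<m} (cycle_w m) {0..<n'} (path_w n')"
proof -
  have d: "2 \<le> gcd m (2 * (n' - 1))"
    using two_le_gcd_if_not_coprime assms by simp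
  show ?thesis
    by (rule common_factor_folded_cycle[OF weight_fun_cycle[OF m] weight_fun_path[OF n'] d
          factor_map_cycle_fold[OF m d] factor_map_path_fold[OF n' d]]) simp_all
qed

theorem proposition4p9:
  fixes m n n' :: nat
  assumes "3 \<le> m" and "3 \<le> n" and "2 \<le> n'"
  shows "(weakly_disjoint {0..<m} (cycle_w m) {0..<n} (cycle_w n) \<longleftrightarrow>
            \<not> has_nontrivial_common_factor {0..<m} (cycle_w m) {0..<n} (cycle_w n))
       \<and> (strongly_disjoint {0..<m} (cycle_w m) {0..<n'} (path_w n') \<longleftrightarrow>
            \<not> has_nontrivial_common_factor {0..<m} (cycle_w m) {0..<n'} (path_w n'))"
proof
  note wm = weight_fun_cycle[OF assms(1)] and wn = weight_fun_cycle[OF assms(2)]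
    and wp = weight_fun_path[OF assms(3)]
  show "weakly_disjoint {0..<m} (cycle_w m) {0..<n} (cycle_w n) \<longleftrightarrow>
      \<not> has_nontrivial_common_factor {0..<m} (cycle_w m) {0..<n} (cycle_w n)"
    using weakly_disjoint_cycles_if_coprime common_factor_cycles_if_not_coprime
      not_weakly_disjoint_if_common_factor[OF wm wn] assms by blast
  show "strongly_disjoint {0..<m} (cycle_w m) {0..<n'} (path_w n') \<longleftrightarrow>
      \<not> has_nontrivial_common_factor {0..<m} (cycle_w m) {0..<n'} (path_w n')"
    using strongly_disjoint_cycle_path_if_coprime common_factor_cycle_path_if_not_coprime
      not_strongly_disjoint_if_common_factor[OF wm wp] assms by blast
qed

end
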